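(* Assume (H1), (H3), (H4). Let $u\in C(\mathbb{R}^n\times[0,T))$ be a Barron–Jensen solution of (1.1)–(1.2). Let $x_0\in\mathbb{R}^n$, $0<\rho<r$, and $\gamma\ge(\frac{\beta}{2}+2)C_1+K_3$. Then for every sufficiently small $\varepsilon>0$ (depending on $\rho$, $\gamma$, $T$ and $\max_{\overline{B_r(x_0)}\times[0,T)}|u|$, assumed finite), the inf-convolution $$u_\varepsilon(x,t)=\inf_{y\in\overline{B_r(x_0)}}\Big\{u(y,t)+e^{-\gamma t}\frac{|x-y|^2}{\varepsilon^2}\Big\}$$ is a viscosity subsolution of $$u_t+H(x,t,u,D_xu)=\frac{\beta C_1}{2}e^{\gamma t}\varepsilon^2\quad\text{in }B_{r-\rho}(x_0)\times(0,T).$$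
   Context: $T>0$; $H:\mathbb{R}^n\times[0,T]\times\mathbb{R}\times\mathbb{R}^n\to\mathbb{R}$ continuous; $u_0$ Lipschitz. Problem (1.1)–(1.2): $u_t+H(x,t,u,D_xu)=0$ in $\mathbb{R}^n\times(0,T)$, $u(x,0)=u_0(x)$. (H1) there exist $C_1\ge0$, $\beta\in\{0,1\}$ with $|H(x,t,u,p)-H(y,t,u,p)|\le C_1(\beta+|p|)|x-y|$. (H3) there exists $K_3\ge0$ with $|H(x,t,u,p)-H(x,t,v,p)|\le K_3|u-v|$. (H4) $p\mapsto H(x,t,u,p)$ convex. Barron–Jensen solution: $u$ with $u(\cdot,0)=u_0$ such that for every $\phi\in C^1(\mathbb{R}^n\times(0,T))$, if $u-\phi$ has a local minimum at $(x,t)\in\mathbb{R}^n\times(0,T)$ then $\phi_t(x,t)+H(x,t,u(x,t),D_x\phi(x,t))=0$. Viscosity subsolution of $u_t+H=g$ in open $O$: for every $\phi\in C^1(O)$ with $u-\phi$ having a local max at $(x,t)\in O$, $\phi_t+H(x,t,u(x,t),D_x\phi(x,t))\le g(x,t)$. *)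

theory Defs
  imports "HOL-Analysis.Analysis"
begin

definition C1_on :: "('a::euclidean_space \<times> real \<Rightarrow> real) \<Rightarrow> ('a \<times> real) set
    \<Rightarrow> ('a \<times> real \<Rightarrow> 'a) \<Rightarrow> ('a \<times> real \<Rightarrow> real) \<Rightarrow> bool" where
  "C1_on \<phi> S Dx Dt \<longleftrightarrow>
     (\<forall>p\<in>S. (\<phi> has_derivative (\<lambda>(h, s). Dx p \<bullet> h + Dt p * s)) (at p))
     \<and> continuous_on S Dx \<and> continuous_on S Dt"

definition local_min_at :: "('a::real_normed_vector \<times> real \<Rightarrow> real) \<Rightarrow> ('a \<times> real) set \<Rightarrow> 'a \<times> real \<Rightarrow> bool" where
  "local_min_at f S p \<longleftrightarrow> (\<exists>e>0. \<forall>q\<in>ball p e \<inter> S. f p \<le> f q)"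

definition local_max_at :: "('a::real_normed_vector \<times> real \<Rightarrow> real) \<Rightarrow> ('a \<times> real) set \<Rightarrow> 'a \<times> real \<Rightarrow> bool" where
  "local_max_at f S p \<longleftrightarrow> (\<exists>e>0. \<forall>q\<in>ball p e \<inter> S. f q \<le> f p)"

definition BJ_solution :: "('a::euclidean_space \<Rightarrow> real \<Rightarrow> real \<Rightarrow> 'a \<Rightarrow> real) \<Rightarrow> real
    \<Rightarrow> ('a \<Rightarrow> real) \<Rightarrow> ('a \<Rightarrow> real \<Rightarrow> real) \<Rightarrow> bool" where
  "BJ_solution H T u0 u \<longleftrightarrow>
     (\<forall>x. u x 0 = u0 x) \<and>
     (\<forall>\<phi> Dx Dt. C1_on \<phi> (UNIV \<times> {0<..<T}) Dx Dt \<longrightarrow>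
        (\<forall>x t. t \<in> {0<..<T} \<longrightarrow> local_min_at (\<lambda>(y, s). u y s - \<phi> (y, s)) (UNIV \<times> {0<..<T}) (x, t) \<longrightarrow>
           Dt (x, t) + H x t (u x t) (Dx (x, t)) = 0))"

definition visc_subsolution :: "('a::euclidean_space \<Rightarrow> real \<Rightarrow> real \<Rightarrow> 'a \<Rightarrow> real)
    \<Rightarrow> ('a \<Rightarrow> real \<Rightarrow> real) \<Rightarrow> ('a \<times> real) set \<Rightarrow> ('a \<Rightarrow> real \<Rightarrow> real) \<Rightarrow> bool" where
  "visc_subsolution H g S w \<longleftrightarrow>
     (\<forall>\<phi> Dx Dt. C1_on \<phi> S Dx Dt \<longrightarrow>
        (\<forall>x t. (x, t) \<in> S \<longrightarrow> local_max_at (\<lambda>(y, s). w y s - \<phi> (y, s)) S (x, t) \<longrightarrow>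
           Dt (x, t) + H x t (w x t) (Dx (x, t)) \<le> g x t))"

end

theory Submission
  imports Defs
begin

text \<open>
  Let \<open>\<phi>\<close> touch the inf-convolution \<open>u\<^sub>\<epsilon>\<close> from above at \<open>(xh, th)\<close>. Double the time variable:
  for \<open>\<alpha> > 0\<close> and a short window \<open>I\<close> around \<open>th\<close> put
  \<open>W\<^sub>\<alpha>(x, t) = min {u(y, s) + e\<^sup>-\<^sup>\<gamma>\<^sup>s |x - y|\<^sup>2 / \<epsilon>\<^sup>2 + (t - s)\<^sup>2 / \<alpha> | |y - x0| \<le> r, s \<in> I}\<close>.
  As \<open>\<alpha> \<rightarrow> 0\<close>, a maximiser of \<open>W\<^sub>\<alpha> - \<phi> - |\<cdot> - (xh, th)|\<^sup>2\<close> tends to the contact point,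
  and so do the times \<open>s\<close> of the corresponding minimisers.

  \<open>W\<^sub>\<alpha>\<close> is an infimum of functions quadratic in \<open>(x, t)\<close>, so by a Danskin-type separation
  argument the gradient of the test function at the maximiser lies in every closed convex set
  containing the penalty gradients at all minimisers; convexity of \<open>H\<close> in \<open>p\<close> makes the
  sublevel set of the subsolution inequality such a set. At a minimiser \<open>(y, s)\<close>, \<open>u\<close> minus
  the penalty has a local minimum, so the Barron--Jensen property gives an equation at \<open>(y, s)\<close>.
  (H1), (H3), the choice of \<open>\<gamma>\<close> and \<open>|x - y| \<le> (e\<^sup>-\<^sup>\<gamma>\<^sup>s |x - y|\<^sup>2/\<epsilon>\<^sup>2 + e\<^sup>\<gamma>\<^sup>s \<epsilon>\<^sup>2) / 2\<close>
  move it to \<open>(x, s)\<close> at the price of \<open>\<beta> C1 e\<^sup>\<gamma>\<^sup>s \<epsilon>\<^sup>2 / 2\<close>; smallness of \<open>\<epsilon>\<close> keeps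
  \<open>|x - y| < \<rho>\<close>, so minimisers are interior. Continuity in time of \<open>H\<close>, \<open>u\<^sub>\<epsilon>\<close> and the
  right-hand side finally lets \<open>\<alpha> \<rightarrow> 0\<close>.
\<close>

section \<open>Infima over compact sets and continuity\<close>

lemma Inf_image_attained:
  fixes f :: "'m::topological_space \<Rightarrow> real"
  assumes "compact M" "M \<noteq> {}" "continuous_on M f"
  obtains m where "m \<in> M" "Inf (f ` M) = f m" "\<And>m'. m' \<in> M \<Longrightarrow> f m \<le> f m'"
proof -
  obtain m where m: "m \<in> M" "\<forall>m'\<in>M. f m \<le> f m'"
    using continuous_attains_inf[OF assms] by blast
  then have "Inf (f ` M) = f m" by (intro cInf_eq_minimum) auto
  with m show thesis using that by blast
qed

lemma Inf_image_le:
  fixes f :: "'m::topological_space \<Rightarrow> real"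
  assumes "compact M" "continuous_on M f" "m \<in> M"
  shows "Inf (f ` M) \<le> f m"
  using assms by (intro cINF_lower bounded_imp_bdd_below compact_imp_bounded compact_continuous_image)

lemma compact_strict_lower_bound:
  fixes f :: "'m::topological_space \<Rightarrow> real"
  assumes "compact K" "continuous_on K f" "\<And>m. m \<in> K \<Longrightarrow> c < f m"
  obtains \<kappa> where "\<kappa> > 0" "\<And>m. m \<in> K \<Longrightarrow> c + \<kappa> \<le> f m"
proof (cases "K = {}")
  case True
  then show thesis using that[of 1] by auto
next
  case False
  obtain m0 where "m0 \<in> K" "\<forall>m\<in>K. f m0 \<le> f m"
    using continuous_attains_inf[OF assms(1) False assms(2)] by blast
  then show thesis using that[of "f m0 - c"] assms(3) by force
qed

lemma uniformly_continuous_on_Inf_image: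
  fixes G :: "'z::metric_space \<Rightarrow> 'y::metric_space \<Rightarrow> real"
  assumes Y: "compact Y" "Y \<noteq> {}"
    and G: "uniformly_continuous_on (Z \<times> Y) (\<lambda>(z, y). G z y)"
  shows "uniformly_continuous_on Z (\<lambda>z. Inf (G z ` Y))"
  unfolding uniformly_continuous_on_def
proof (intro allI impI)
  fix e :: real assume "e > 0"
  then obtain d where d: "d > 0" "\<And>p p'. p \<in> Z \<times> Y \<Longrightarrow> p' \<in> Z \<times> Y \<Longrightarrow> dist p' p < d \<Longrightarrow>
       dist ((\<lambda>(z, y). G z y) p') ((\<lambda>(z, y). G z y) p) < e / 2"
    using G unfolding uniformly_continuous_on_def by (metis half_gt_zero)
  have "continuous_on Y (G z)" if "z \<in> Z" for z
  proof -
    have "continuous_on (Z \<times> Y) (\<lambda>(z, y). G z y)"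
      using G uniformly_continuous_imp_continuous by blast
    then have "continuous_on Y ((\<lambda>(z, y). G z y) \<circ> Pair z)"
      by (intro continuous_on_compose continuous_intros) (auto intro: continuous_on_subset simp: that)
    then show ?thesis by (simp add: o_def)
  qed
  then have min: "\<exists>y\<in>Y. Inf (G z ` Y) = G z y \<and> (\<forall>y'\<in>Y. G z y \<le> G z y')" if "z \<in> Z" for z
    using Inf_image_attained[OF Y] that by metis
  have close: "\<bar>G z' y - G z y\<bar> < e / 2" if "z \<in> Z" "z' \<in> Z" "y \<in> Y" "dist z' z < d" for z z' y
    using d(2)[of "(z, y)" "(z', y)"] that by (simp add: dist_Pair_Pair dist_real_def)
  show "\<exists>d>0. \<forall>z\<in>Z. \<forall>z'\<in>Z. dist z' z < d \<longrightarrow> dist (Inf (G z' ` Y)) (Inf (G z ` Y)) < e"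
  proof (intro exI[of _ d] conjI ballI impI)
    fix z z' assume zz: "z \<in> Z" "z' \<in> Z" "dist z' z < d"
    obtain y1 where y1: "y1 \<in> Y" "Inf (G z ` Y) = G z y1" "\<forall>y'\<in>Y. G z y1 \<le> G z y'"
      using min zz(1) by blast
    obtain y2 where y2: "y2 \<in> Y" "Inf (G z' ` Y) = G z' y2" "\<forall>y'\<in>Y. G z' y2 \<le> G z' y'"
      using min zz(2) by blast
    have "G z' y2 \<le> G z' y1" "G z y1 \<le> G z y2" using y1 y2 by auto
    moreover have "\<bar>G z' y1 - G z y1\<bar> < e / 2" "\<bar>G z' y2 - G z y2\<bar> < e / 2"
      using close zz y1 y2 by auto
    ultimately show "dist (Inf (G z' ` Y)) (Inf (G z ` Y)) < e"
      unfolding dist_real_def y1(2) y2(2) abs_less_iff by linarith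
  qed (use d in auto)
qed

lemma uniform_modulus_in_second_argument:
  fixes F :: "'b::metric_space \<Rightarrow> real \<Rightarrow> real"
  assumes "uniformly_continuous_on (A \<times> J) (\<lambda>(a, t). F a t)" "\<eta> > 0"
  obtains \<delta> where "\<delta> > 0" "\<And>a s t. a \<in> A \<Longrightarrow> s \<in> J \<Longrightarrow> t \<in> J \<Longrightarrow> \<bar>s - t\<bar> < \<delta> \<Longrightarrow> \<bar>F a s - F a t\<bar> < \<eta>"
proof -
  obtain \<delta> where "\<delta> > 0" and \<delta>: "\<forall>p\<in>A \<times> J. \<forall>p'\<in>A \<times> J. dist p' p < \<delta> \<longrightarrow>
      dist ((\<lambda>(a, t). F a t) p') ((\<lambda>(a, t). F a t) p) < \<eta>"
    using assms unfolding uniformly_continuous_on_def by blast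
  moreover have "\<bar>F a s - F a t\<bar> < \<eta>" if "a \<in> A" "s \<in> J" "t \<in> J" "\<bar>s - t\<bar> < \<delta>" for a s t
    using \<delta>[rule_format, of "(a, t)" "(a, s)"] that by (simp add: dist_Pair_Pair dist_real_def)
  ultimately show thesis using that by blast
qed

lemma le_of_continuous_approximation:
  fixes L :: "'z::metric_space \<times> real \<Rightarrow> real"
  assumes cont: "continuous (at (z0, v0) within S \<times> UNIV) L"
    and approx: "\<And>\<eta>. \<eta> > 0 \<Longrightarrow> \<exists>z\<in>S. \<exists>v. dist z z0 < \<eta> \<and> \<bar>v - v0\<bar> < \<eta> \<and> L (z, v) \<le> c + \<eta>"
  shows "L (z0, v0) \<le> c"
proof (rule ccontr)
  define e where "e = (L (z0, v0) - c) / 2"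
  assume "\<not> L (z0, v0) \<le> c"
  then have "e > 0" by (simp add: e_def)
  then obtain d where "d > 0" and d: "\<And>p. p \<in> S \<times> UNIV \<Longrightarrow> dist p (z0, v0) < d \<Longrightarrow> dist (L p) (L (z0, v0)) < e"
    using cont unfolding continuous_within_eps_delta by blast
  then obtain z v where zv: "z \<in> S" "dist z z0 < d / 2" "\<bar>v - v0\<bar> < d / 2" "L (z, v) \<le> c + min (d / 2) e"
    using approx[of "min (d / 2) e"] \<open>e > 0\<close> by auto
  have "dist (z, v) (z0, v0) < d"
    unfolding dist_Pair_Pair using zv by (intro sqrt_sum_squares_half_less) (auto simp: dist_real_def)
  then have "L (z0, v0) - L (z, v) < e" using d zv(1) by (force simp: dist_real_def)
  moreover have "L (z, v) \<le> c + e" using zv(4) by linarith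
  moreover have "2 * e = L (z0, v0) - c" by (simp add: e_def)
  ultimately show False by linarith
qed

lemma cball_time_slice:
  fixes x :: "'a::metric_space"
  assumes "cball (x, t) \<delta> \<subseteq> A \<times> B"
  shows "{t - \<delta>..t + \<delta>} \<subseteq> B"
proof
  fix s assume "s \<in> {t - \<delta>..t + \<delta>}"
  then have "(x, s) \<in> cball (x, t) \<delta>" by (auto simp: dist_Pair_Pair dist_real_def)
  with assms show "s \<in> B" by blast
qed

lemma eventually_nhds_le_of_max_on:
  fixes f :: "'a::topological_space \<Rightarrow> real"
  assumes "x \<in> interior K" "\<forall>z\<in>K. f z \<le> f x"
  shows "\<forall>\<^sub>F z in nhds x. f z \<le> f x"
  using eventually_nhds_in_open[OF open_interior assms(1)] by eventually_elim (use assms(2) interior_subset in blast)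

section \<open>A Danskin-type gradient inclusion\<close>

lemma convex_sublevel_snd_plus:
  fixes F :: "'a::real_vector \<Rightarrow> real"
  assumes "convex_on UNIV F"
  shows "convex {P :: 'a \<times> real. snd P + F (fst P) \<le> c}"
  unfolding convex_def
proof (intro allI ballI impI)
  fix x y :: "'a \<times> real" and u v :: real
  assume x: "x \<in> {P. snd P + F (fst P) \<le> c}" and y: "y \<in> {P. snd P + F (fst P) \<le> c}"
    and uv: "0 \<le> u" "0 \<le> v" "u + v = 1"
  have "F (u *\<^sub>R fst x + v *\<^sub>R fst y) \<le> u * F (fst x) + v * F (fst y)"
    using assms uv unfolding convex_on_def by auto
  moreover have "u * (snd x + F (fst x)) \<le> u * c" "v * (snd y + F (fst y)) \<le> v * c"
    using x y uv by (auto intro: mult_left_mono)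
  ultimately have "u * snd x + v * snd y + F (u *\<^sub>R fst x + v *\<^sub>R fst y) \<le> (u + v) * c"
    by (simp add: algebra_simps)
  then show "u *\<^sub>R x + v *\<^sub>R y \<in> {P. snd P + F (fst P) \<le> c}" using uv by simp
qed

lemma has_derivative_directional_upper:
  fixes \<psi> :: "'z::real_inner \<Rightarrow> real"
  assumes "(\<psi> has_derivative (\<lambda>h. G \<bullet> h)) (at z0)" "G \<bullet> a < b"
  shows "\<forall>\<^sub>F h in at_right 0. \<psi> (z0 + h *\<^sub>R a) - \<psi> z0 < h * b"
proof -
  have "((\<lambda>h. z0 + h *\<^sub>R a) has_derivative (\<lambda>h. h *\<^sub>R a)) (at_right 0)"
    by (auto intro!: derivative_eq_intros)
  moreover have "(\<psi> has_derivative (\<lambda>h. G \<bullet> h)) (at (z0 + 0 *\<^sub>R a))"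
    using assms(1) by simp
  ultimately have "((\<lambda>h. \<psi> (z0 + h *\<^sub>R a)) has_derivative (\<lambda>h. G \<bullet> (h *\<^sub>R a))) (at_right 0)"
    by (rule has_derivative_compose)
  then have "((\<lambda>h. \<psi> (z0 + h *\<^sub>R a)) has_field_derivative G \<bullet> a) (at_right 0)"
    unfolding has_field_derivative_def by (rule has_derivative_eq_rhs) (simp add: fun_eq_iff)
  then have "((\<lambda>h. (\<psi> (z0 + h *\<^sub>R a) - \<psi> z0) / h) \<longlongrightarrow> G \<bullet> a) (at_right 0)"
    by (simp add: has_field_derivative_iff)
  then have "\<forall>\<^sub>F h in at_right 0. (\<psi> (z0 + h *\<^sub>R a) - \<psi> z0) / h < b"
    using assms(2) by (rule order_tendstoD)
  then show ?thesis
    using eventually_at_right_less[of 0] by eventually_elim (simp add: divide_less_eq mult.commute)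
qed

lemma eventually_Inf_family_minimisers_in_halfspace:
  fixes f :: "'z::real_inner \<Rightarrow> 'm::metric_space \<Rightarrow> real" and g :: "'m \<Rightarrow> 'z"
  assumes M: "compact M" "M \<noteq> {}"
    and f_cont: "\<And>z. continuous_on M (f z)" and g_cont: "continuous_on M g"
    and expansion: "\<And>m h. m \<in> M \<Longrightarrow> f (z0 + h *\<^sub>R a) m = f z0 m + h * (g m \<bullet> a) + h\<^sup>2 * Q m"
    and Q: "\<And>m. m \<in> M \<Longrightarrow> 0 \<le> Q m" "\<And>m. m \<in> M \<Longrightarrow> Q m \<le> BQ"
    and minimisers: "\<And>m. m \<in> M \<Longrightarrow> f z0 m = Inf (f z0 ` M) \<Longrightarrow> b < g m \<bullet> a"
  shows "\<forall>\<^sub>F h in at_right 0. \<forall>m\<in>M. f (z0 + h *\<^sub>R a) m = Inf (f (z0 + h *\<^sub>R a) ` M) \<longrightarrow> b < g m \<bullet> a"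
proof -
  obtain m0 where m0: "m0 \<in> M" "Inf (f z0 ` M) = f z0 m0" "\<And>m. m \<in> M \<Longrightarrow> f z0 m0 \<le> f z0 m"
    using Inf_image_attained[OF M f_cont] by metis
  have ga_cont: "continuous_on M (\<lambda>m. g m \<bullet> a)" by (intro continuous_intros g_cont)
  define K where "K = {m \<in> M. g m \<bullet> a \<le> b}"
  have "closedin (top_of_set M) K"
    unfolding K_def using continuous_closedin_preimage[OF ga_cont, of "{..b}"]
    by (simp add: vimage_def Int_def)
  then have "compact K" using M(1) closedin_compact by blast
  moreover have "f z0 m0 < f z0 m" if "m \<in> K" for m
    using m0 minimisers[of m] that unfolding K_def by force
  ultimately obtain \<kappa> where "\<kappa> > 0" and \<kappa>: "\<And>m. m \<in> K \<Longrightarrow> f z0 m0 + \<kappa> \<le> f z0 m"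
    using compact_strict_lower_bound continuous_on_subset[OF f_cont] unfolding K_def
    by (metis (no_types, lifting) mem_Collect_eq subsetI)
  obtain Bg where Bg: "\<And>m. m \<in> M \<Longrightarrow> \<bar>g m \<bullet> a\<bar> \<le> Bg"
    using compact_imp_bounded[OF compact_continuous_image[OF ga_cont M(1)]] unfolding bounded_iff by auto
  have "Bg \<ge> 0" "BQ \<ge> 0" using Bg[OF m0(1)] Q[OF m0(1)] by auto
  then have "0 < min 1 (\<kappa> / (2 * Bg + BQ + 1))" using \<open>\<kappa> > 0\<close> by simp
  then show ?thesis
  proof (rule eventually_at_rightI[rotated], intro ballI impI)
    fix h m assume "h \<in> {0<..<min 1 (\<kappa> / (2 * Bg + BQ + 1))}" and m: "m \<in> M"
      and min: "f (z0 + h *\<^sub>R a) m = Inf (f (z0 + h *\<^sub>R a) ` M)"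
    then have h: "0 < h" "h < 1" "h * (2 * Bg + BQ + 1) < \<kappa>"
      using \<open>Bg \<ge> 0\<close> \<open>BQ \<ge> 0\<close> by (auto simp: less_divide_eq add_pos_nonneg)
    have gQ: "\<bar>h * (g m' \<bullet> a)\<bar> \<le> h * Bg" "0 \<le> h\<^sup>2 * Q m'" "h\<^sup>2 * Q m' \<le> h * BQ" if "m' \<in> M" for m'
    proof -
      have "h * Q m' \<le> BQ" using h Q[OF that] mult_left_le_one_le[of "Q m'" h] by linarith
      then show "\<bar>h * (g m' \<bullet> a)\<bar> \<le> h * Bg" "0 \<le> h\<^sup>2 * Q m'" "h\<^sup>2 * Q m' \<le> h * BQ"
        using h Bg[OF that] Q[OF that] by (auto simp: abs_mult power2_eq_square mult.assoc intro!: mult_left_mono)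
    qed
    have "f (z0 + h *\<^sub>R a) m \<le> f (z0 + h *\<^sub>R a) m0"
      using min Inf_image_le[OF M(1) f_cont m0(1)] by simp
    also have "\<dots> \<le> f z0 m0 + h * Bg + h * BQ"
      using expansion[OF m0(1), of h] gQ[OF m0(1)] unfolding abs_le_iff by linarith
    finally have "m \<notin> K"
      using expansion[OF m(1), of h] gQ[OF m(1)] \<kappa> h unfolding abs_le_iff by (force simp: algebra_simps)
    then show "b < g m \<bullet> a" using m by (simp add: K_def)
  qed
qed

lemma Inf_family_directional_lower:
  fixes f :: "'z::real_inner \<Rightarrow> 'm::metric_space \<Rightarrow> real" and g :: "'m \<Rightarrow> 'z"
  assumes M: "compact M" "M \<noteq> {}"
    and f_cont: "\<And>z. continuous_on M (f z)" and g_cont: "continuous_on M g"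
    and expansion: "\<And>m h. m \<in> M \<Longrightarrow> f (z0 + h *\<^sub>R a) m = f z0 m + h * (g m \<bullet> a) + h\<^sup>2 * Q m"
    and Q: "\<And>m. m \<in> M \<Longrightarrow> 0 \<le> Q m" "\<And>m. m \<in> M \<Longrightarrow> Q m \<le> BQ"
    and minimisers: "\<And>m. m \<in> M \<Longrightarrow> f z0 m = Inf (f z0 ` M) \<Longrightarrow> b < g m \<bullet> a"
  shows "\<forall>\<^sub>F h in at_right 0. h * b < Inf (f (z0 + h *\<^sub>R a) ` M) - Inf (f z0 ` M)"
proof -
  have "\<forall>\<^sub>F h in at_right 0. \<forall>m\<in>M. f (z0 + h *\<^sub>R a) m = Inf (f (z0 + h *\<^sub>R a) ` M) \<longrightarrow> b < g m \<bullet> a"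
    by (rule eventually_Inf_family_minimisers_in_halfspace[OF M f_cont g_cont expansion Q minimisers])
  with eventually_at_right_less[of 0] show ?thesis
  proof eventually_elim
    case (elim h)
    obtain mh where mh: "mh \<in> M" "Inf (f (z0 + h *\<^sub>R a) ` M) = f (z0 + h *\<^sub>R a) mh"
      using Inf_image_attained[OF M f_cont] by metis
    have "h * b < h * (g mh \<bullet> a)" using elim mh by simp
    moreover have "Inf (f z0 ` M) \<le> f z0 mh" using Inf_image_le[OF M(1) f_cont mh(1)] .
    moreover have "0 \<le> h\<^sup>2 * Q mh" using Q(1)[OF mh(1)] by simp
    ultimately show ?case using expansion[OF mh(1), of h] mh(2) by linarith
  qed
qed

lemma Inf_family_local_max_gradient_in_convex:
  fixes f :: "'z::euclidean_space \<Rightarrow> 'm::metric_space \<Rightarrow> real" and g :: "'m \<Rightarrow> 'z"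
  assumes M: "compact M" "M \<noteq> {}"
    and f_cont: "\<And>z. continuous_on M (f z)" and g_cont: "continuous_on M g"
    and expansion: "\<And>m h e. m \<in> M \<Longrightarrow> f (z0 + h *\<^sub>R e) m = f z0 m + h * (g m \<bullet> e) + h\<^sup>2 * Q m e"
    and Q_nonneg: "\<And>m e. m \<in> M \<Longrightarrow> 0 \<le> Q m e" and Q_bounded: "\<And>e. \<exists>B. \<forall>m\<in>M. Q m e \<le> B"
    and local_max: "\<forall>\<^sub>F z in nhds z0. Inf (f z ` M) - \<psi> z \<le> Inf (f z0 ` M) - \<psi> z0"
    and \<psi>: "(\<psi> has_derivative (\<lambda>h. G \<bullet> h)) (at z0)"
    and C: "closed C" "convex C" "\<And>m. m \<in> M \<Longrightarrow> f z0 m = Inf (f z0 ` M) \<Longrightarrow> g m \<in> C"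
  shows "G \<in> C"
proof (rule ccontr)
  assume "G \<notin> C"
  \<comment> \<open>Along a direction separating \<open>G\<close> from \<open>C\<close> the infimum grows faster than \<open>\<psi>\<close>.\<close>
  then obtain a b where ab: "G \<bullet> a < b" "\<And>x. x \<in> C \<Longrightarrow> b < x \<bullet> a"
    using separating_hyperplane_closed_point[OF C(2,1)] by (metis inner_commute)
  obtain BQ where "\<forall>m\<in>M. Q m a \<le> BQ" using Q_bounded by blast
  then have "\<forall>\<^sub>F h in at_right 0. h * b < Inf (f (z0 + h *\<^sub>R a) ` M) - Inf (f z0 ` M)"
    using C(3) ab(2) by (intro Inf_family_directional_lower[OF M f_cont g_cont expansion Q_nonneg]) auto
  moreover have "\<forall>\<^sub>F h in at_right 0. \<psi> (z0 + h *\<^sub>R a) - \<psi> z0 < h * b"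
    using \<psi> ab(1) by (rule has_derivative_directional_upper)
  moreover have "((\<lambda>h. z0 + h *\<^sub>R a) \<longlongrightarrow> z0) (at_right 0)"
    by (auto intro!: tendsto_eq_intros)
  then have "\<forall>\<^sub>F h in at_right 0. Inf (f (z0 + h *\<^sub>R a) ` M) - \<psi> (z0 + h *\<^sub>R a) \<le> Inf (f z0 ` M) - \<psi> z0"
    using local_max unfolding filterlim_iff by blast
  ultimately have "\<forall>\<^sub>F h in at_right (0::real). False"
    by eventually_elim linarith
  then show False by simp
qed

section \<open>The inf-convolution and its time doubling\<close>

lemma quadratic_test_function_C1:
  fixes xb :: "'a::euclidean_space" and tb a b \<gamma> :: real
  shows "C1_on (\<lambda>p. - (a * exp (- \<gamma> * snd p) * (norm (xb - fst p))\<^sup>2 + b * (tb - snd p)\<^sup>2)) S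
     (\<lambda>p. (2 * a * exp (- \<gamma> * snd p)) *\<^sub>R (xb - fst p))
     (\<lambda>p. \<gamma> * a * exp (- \<gamma> * snd p) * (norm (xb - fst p))\<^sup>2 + 2 * b * (tb - snd p))"
  unfolding C1_on_def power2_norm_eq_inner
proof (intro conjI ballI)
  fix p :: "'a \<times> real"
  show "((\<lambda>p. - (a * exp (- \<gamma> * snd p) * ((xb - fst p) \<bullet> (xb - fst p)) + b * (tb - snd p)\<^sup>2)) has_derivative
        (\<lambda>(h, s). (2 * a * exp (- \<gamma> * snd p)) *\<^sub>R (xb - fst p) \<bullet> h +
           (\<gamma> * a * exp (- \<gamma> * snd p) * ((xb - fst p) \<bullet> (xb - fst p)) + 2 * b * (tb - snd p)) * s)) (at p)"
    by (rule has_derivative_eq_rhs, (rule derivative_eq_intros refl)+)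
      (auto simp: fun_eq_iff algebra_simps inner_commute power2_eq_square)
qed (intro continuous_intros; simp)+

locale BJ_inf_convolution =
  fixes H :: "'a::euclidean_space \<Rightarrow> real \<Rightarrow> real \<Rightarrow> 'a \<Rightarrow> real"
    and T :: real and u0 :: "'a \<Rightarrow> real" and u :: "'a \<Rightarrow> real \<Rightarrow> real"
    and C1 K3 \<beta> \<gamma> :: real and x0 :: 'a and r \<rho> \<epsilon> Mb :: real
  assumes T_pos: "T > 0"
    and H_cont: "continuous_on (UNIV \<times> {0..T} \<times> UNIV \<times> UNIV) (\<lambda>(x, t, v, p). H x t v p)"
    and C1_nonneg: "C1 \<ge> 0" and beta: "\<beta> \<in> {0, 1}"
    and H_lipschitz_x: "\<And>x y t v p. t \<in> {0..T} \<Longrightarrow> \<bar>H x t v p - H y t v p\<bar> \<le> C1 * (\<beta> + norm p) * norm (x - y)"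
    and K3_nonneg: "K3 \<ge> 0"
    and H_lipschitz_u: "\<And>x t v w p. t \<in> {0..T} \<Longrightarrow> \<bar>H x t v p - H x t w p\<bar> \<le> K3 * \<bar>v - w\<bar>"
    and H_convex: "\<And>x t v. t \<in> {0..T} \<Longrightarrow> convex_on UNIV (H x t v)"
    and u_cont: "continuous_on (UNIV \<times> {0..<T}) (\<lambda>(x, t). u x t)"
    and u_BJ: "BJ_solution H T u0 u"
    and rho: "0 < \<rho>" "\<rho> < r"
    and gamma: "\<gamma> \<ge> (\<beta> / 2 + 2) * C1 + K3"
    and eps: "\<epsilon> > 0"
    and u_bound: "\<And>x t. x \<in> cball x0 r \<Longrightarrow> t \<in> {0..<T} \<Longrightarrow> \<bar>u x t\<bar> \<le> Mb"
    and eps_small: "2 * Mb * exp (\<gamma> * T) * \<epsilon>\<^sup>2 < \<rho>\<^sup>2"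
  \<comment> \<open>the smallness of \<open>\<epsilon>\<close>: it keeps every minimiser \<open>y\<close> of the inf-convolution at \<open>x\<close> within \<open>\<rho>\<close> of \<open>x\<close>\<close>
begin

lemma Mb_nonneg: "0 \<le> Mb"
  using u_bound[of x0 0] T_pos rho by auto

lemma gamma_nonneg: "0 \<le> \<gamma>"
  using gamma C1_nonneg K3_nonneg beta by (auto intro!: add_nonneg_nonneg mult_nonneg_nonneg)

lemma u_continuous_on: "K \<subseteq> UNIV \<times> {0..<T} \<Longrightarrow> continuous_on K (\<lambda>m. u (fst m) (snd m))"
  using continuous_on_subset[OF u_cont] by (simp add: case_prod_unfold)

definition infconv :: "'a \<Rightarrow> real \<Rightarrow> real" where
  "infconv x t = (INF y\<in>cball x0 r. u y t + exp (- \<gamma> * t) * (norm (x - y))\<^sup>2 / \<epsilon>\<^sup>2)"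

lemma infconv_attained:
  assumes "t \<in> {0..<T}"
  obtains y where "y \<in> cball x0 r" "infconv x t = u y t + exp (- \<gamma> * t) * (norm (x - y))\<^sup>2 / \<epsilon>\<^sup>2"
proof -
  have "continuous_on (cball x0 r) (\<lambda>y. u (fst (y, t)) (snd (y, t)))"
    using assms by (intro continuous_on_compose2[OF u_continuous_on[OF subset_refl]]) (auto intro!: continuous_intros)
  then have "continuous_on (cball x0 r) (\<lambda>y. u y t + exp (- \<gamma> * t) * (norm (x - y))\<^sup>2 / \<epsilon>\<^sup>2)"
    using eps by (auto intro!: continuous_intros)
  from Inf_image_attained[OF compact_cball _ this] rho that show thesis
    unfolding infconv_def by auto
qed

lemma infconv_le:
  assumes "t \<in> {0..<T}" "y \<in> cball x0 r"
  shows "infconv x t \<le> u y t + exp (- \<gamma> * t) * (norm (x - y))\<^sup>2 / \<epsilon>\<^sup>2"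
proof -
  have "continuous_on (cball x0 r) (\<lambda>y. u (fst (y, t)) (snd (y, t)))"
    using assms by (intro continuous_on_compose2[OF u_continuous_on[OF subset_refl]]) (auto intro!: continuous_intros)
  then show ?thesis
    unfolding infconv_def using assms eps by (intro Inf_image_le) (auto intro!: continuous_intros)
qed

lemma infconv_bounds:
  assumes "t \<in> {0..<T}"
  shows "- Mb \<le> infconv x t" and "x \<in> cball x0 r \<Longrightarrow> infconv x t \<le> Mb"
proof -
  obtain y where y: "y \<in> cball x0 r" "infconv x t = u y t + exp (- \<gamma> * t) * (norm (x - y))\<^sup>2 / \<epsilon>\<^sup>2"
    using infconv_attained[OF assms] .
  moreover have "0 \<le> exp (- \<gamma> * t) * (norm (x - y))\<^sup>2 / \<epsilon>\<^sup>2" by simp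
  ultimately show "- Mb \<le> infconv x t" using u_bound[OF y(1) assms] by linarith
  show "infconv x t \<le> Mb" if "x \<in> cball x0 r"
    using infconv_le[OF assms that, of x] u_bound[OF that assms] by simp
qed

lemma infconv_uniformly_continuous:
  assumes "compact J" "J \<subseteq> {0..<T}"
  shows "uniformly_continuous_on (cball x0 r \<times> J) (\<lambda>z. infconv (fst z) (snd z))"
proof -
  have "continuous_on ((cball x0 r \<times> J) \<times> cball x0 r) (\<lambda>p. u (fst (snd p, snd (fst p))) (snd (snd p, snd (fst p))))"
    using assms(2) by (intro continuous_on_compose2[OF u_continuous_on[OF subset_refl]]) (auto intro!: continuous_intros)
  then have "continuous_on ((cball x0 r \<times> J) \<times> cball x0 r)
      (\<lambda>(z, y). u y (snd z) + exp (- \<gamma> * snd z) * (norm (fst z - y))\<^sup>2 / \<epsilon>\<^sup>2)"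
    using eps by (auto simp: case_prod_unfold intro!: continuous_intros)
  then have "uniformly_continuous_on ((cball x0 r \<times> J) \<times> cball x0 r)
      (\<lambda>(z, y). u y (snd z) + exp (- \<gamma> * snd z) * (norm (fst z - y))\<^sup>2 / \<epsilon>\<^sup>2)"
    using assms(1) by (intro compact_uniformly_continuous compact_Times) auto
  from uniformly_continuous_on_Inf_image[OF compact_cball _ this] rho show ?thesis
    by (simp add: infconv_def)
qed

lemma penalty_localisation:
  assumes "x \<in> cball x0 r" "y \<in> cball x0 r" "s \<in> {0..<T}"
    and "u y s + exp (- \<gamma> * s) * (norm (x - y))\<^sup>2 / \<epsilon>\<^sup>2 \<le> u x s"
  shows "norm (x - y) < \<rho>"
proof -
  define q where "q = exp (- \<gamma> * s) * (norm (x - y))\<^sup>2 / \<epsilon>\<^sup>2"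
  have q: "q \<le> 2 * Mb" using assms(4) u_bound[OF assms(1,3)] u_bound[OF assms(2,3)]
    unfolding q_def abs_le_iff by linarith
  have "\<gamma> * s \<le> \<gamma> * T" using assms(3) gamma_nonneg by (intro mult_left_mono) auto
  then have "exp (\<gamma> * s) * \<epsilon>\<^sup>2 \<le> exp (\<gamma> * T) * \<epsilon>\<^sup>2" by (intro mult_right_mono) auto
  then have "q * (exp (\<gamma> * s) * \<epsilon>\<^sup>2) \<le> 2 * Mb * (exp (\<gamma> * T) * \<epsilon>\<^sup>2)"
    by (rule mult_mono[OF q]) (use Mb_nonneg in auto)
  moreover have "q * (exp (\<gamma> * s) * \<epsilon>\<^sup>2) = (norm (x - y))\<^sup>2"
    using eps by (simp add: q_def exp_minus field_simps)
  ultimately have "(norm (x - y))\<^sup>2 < \<rho>\<^sup>2" using eps_small by (simp add: mult.assoc)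
  then show ?thesis using rho(1) by (simp add: power_less_imp_less_base)
qed

definition doubled :: "real \<Rightarrow> 'a \<times> real \<Rightarrow> 'a \<times> real \<Rightarrow> real" where
  "doubled \<alpha> z m = u (fst m) (snd m) + exp (- \<gamma> * snd m) * (norm (fst z - fst m))\<^sup>2 / \<epsilon>\<^sup>2
     + (snd z - snd m)\<^sup>2 / \<alpha>"

definition doubled_inf :: "real \<Rightarrow> real set \<Rightarrow> 'a \<times> real \<Rightarrow> real" where
  "doubled_inf \<alpha> I z = Inf (doubled \<alpha> z ` (cball x0 r \<times> I))"

definition doubled_gradient :: "real \<Rightarrow> 'a \<times> real \<Rightarrow> 'a \<times> real \<Rightarrow> 'a \<times> real" where
  "doubled_gradient \<alpha> z m =
     ((2 * exp (- \<gamma> * snd m) / \<epsilon>\<^sup>2) *\<^sub>R (fst z - fst m), 2 * (snd z - snd m) / \<alpha>)"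

lemma doubled_continuous_on_pairs:
  assumes "K \<subseteq> UNIV \<times> {0..<T}"
  shows "continuous_on (Z \<times> K) (\<lambda>(z, m). doubled \<alpha> z m)"
proof -
  have "continuous_on (Z \<times> K) (\<lambda>p. u (fst (snd p)) (snd (snd p)))"
    using assms by (intro continuous_on_compose2[OF u_continuous_on[OF assms]]) (auto intro!: continuous_intros)
  then show ?thesis
    unfolding doubled_def case_prod_unfold divide_inverse by (intro continuous_intros)
qed

lemma doubled_continuous_on:
  assumes "K \<subseteq> UNIV \<times> {0..<T}"
  shows "continuous_on K (doubled \<alpha> z)"
  unfolding doubled_def divide_inverse by (intro continuous_intros u_continuous_on[OF assms])

lemma doubled_inf_attained:
  assumes "compact I" "I \<noteq> {}" "I \<subseteq> {0..<T}"
  obtains m where "m \<in> cball x0 r \<times> I" "doubled_inf \<alpha> I z = doubled \<alpha> z m"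
proof -
  have ne: "cball x0 r \<times> I \<noteq> {}" using assms(2) rho by auto
  have "cball x0 r \<times> I \<subseteq> UNIV \<times> {0..<T}" using assms(3) by auto
  then have cont: "continuous_on (cball x0 r \<times> I) (doubled \<alpha> z)" by (rule doubled_continuous_on)
  obtain m where "m \<in> cball x0 r \<times> I" "Inf (doubled \<alpha> z ` (cball x0 r \<times> I)) = doubled \<alpha> z m"
    by (rule Inf_image_attained[OF compact_Times[OF compact_cball assms(1)] ne cont])
  then show thesis by (intro that) (simp_all add: doubled_inf_def)
qed

lemma doubled_inf_le:
  assumes "compact I" "I \<subseteq> {0..<T}" "m \<in> cball x0 r \<times> I"
  shows "doubled_inf \<alpha> I z \<le> doubled \<alpha> z m"
proof -
  have "compact (cball x0 r \<times> I)" using assms(1) by (intro compact_Times) auto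
  moreover have "cball x0 r \<times> I \<subseteq> UNIV \<times> {0..<T}" using assms(2) by auto
  then have "continuous_on (cball x0 r \<times> I) (doubled \<alpha> z)" by (rule doubled_continuous_on)
  ultimately show ?thesis unfolding doubled_inf_def using assms(3) by (rule Inf_image_le)
qed

lemma doubled_inf_le_infconv:
  assumes "compact I" "I \<subseteq> {0..<T}" "t \<in> I"
  shows "doubled_inf \<alpha> I (x, t) \<le> infconv x t"
proof -
  obtain y where "y \<in> cball x0 r" "infconv x t = u y t + exp (- \<gamma> * t) * (norm (x - y))\<^sup>2 / \<epsilon>\<^sup>2"
    using infconv_attained assms by blast
  then show ?thesis
    using doubled_inf_le[OF assms(1,2), of "(y, t)" \<alpha> "(x, t)"] assms(3) by (simp add: doubled_def)
qed

lemma infconv_le_doubled: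
  assumes "m \<in> cball x0 r \<times> I" "I \<subseteq> {0..<T}"
  shows "infconv (fst z) (snd m) + (snd z - snd m)\<^sup>2 / \<alpha> \<le> doubled \<alpha> z m"
proof -
  have "snd m \<in> {0..<T}" "fst m \<in> cball x0 r" using assms by auto
  from infconv_le[OF this, of "fst z"] show ?thesis by (simp add: doubled_def)
qed

lemma doubled_inf_time_gap:
  assumes "\<alpha> > 0" "compact I" "I \<subseteq> {0..<T}" "x \<in> cball x0 r" "t \<in> I" "(y, s) \<in> cball x0 r \<times> I"
    and min: "doubled \<alpha> (x, t) (y, s) = doubled_inf \<alpha> I (x, t)"
  shows "(t - s)\<^sup>2 / \<alpha> \<le> infconv x t - infconv x s" and "(t - s)\<^sup>2 \<le> 2 * Mb * \<alpha>"
proof -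
  show gap: "(t - s)\<^sup>2 / \<alpha> \<le> infconv x t - infconv x s"
    using infconv_le_doubled[OF assms(6,3), of "(x, t)" \<alpha>] doubled_inf_le_infconv[OF assms(2,3,5), of \<alpha> x] min
    by simp
  have "t \<in> {0..<T}" "s \<in> {0..<T}" using assms(3,5,6) by auto
  then have "infconv x t - infconv x s \<le> 2 * Mb"
    using infconv_bounds(1)[of s x] infconv_bounds(2)[of t x] assms(4) by linarith
  then have "(infconv x t - infconv x s) * \<alpha> \<le> 2 * Mb * \<alpha>" using assms(1) by simp
  moreover have "(t - s)\<^sup>2 \<le> (infconv x t - infconv x s) * \<alpha>" using gap assms(1) by (simp add: divide_le_eq)
  ultimately show "(t - s)\<^sup>2 \<le> 2 * Mb * \<alpha>" by linarith
qed

lemma eventually_doubled_inf_gt: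
  assumes "compact I" "I \<subseteq> {0..<T}" "x \<in> cball x0 r" "t \<in> I" "\<eta> > 0"
  shows "\<forall>\<^sub>F \<alpha> in at_right 0. infconv x t - \<eta> < doubled_inf \<alpha> I (x, t)"
proof -
  have "uniformly_continuous_on (cball x0 r \<times> I) (\<lambda>(x, t). infconv x t)"
    using infconv_uniformly_continuous[OF assms(1,2)] by (simp add: case_prod_unfold)
  then obtain \<delta> where "\<delta> > 0"
    and \<delta>: "\<And>s. s \<in> I \<Longrightarrow> \<bar>s - t\<bar> < \<delta> \<Longrightarrow> \<bar>infconv x s - infconv x t\<bar> < \<eta>"
    using uniform_modulus_in_second_argument assms(3-5) by metis
  have "0 < \<delta>\<^sup>2 / (2 * Mb + 1)" using \<open>\<delta> > 0\<close> Mb_nonneg by simp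
  then show ?thesis
  proof (rule eventually_at_rightI[rotated])
    fix \<alpha> assume "\<alpha> \<in> {0<..<\<delta>\<^sup>2 / (2 * Mb + 1)}"
    then have \<alpha>: "0 < \<alpha>" "(2 * Mb + 1) * \<alpha> < \<delta>\<^sup>2"
      using Mb_nonneg by (auto simp: less_divide_eq mult.commute add_nonneg_pos)
    obtain y s where m: "(y, s) \<in> cball x0 r \<times> I" "doubled_inf \<alpha> I (x, t) = doubled \<alpha> (x, t) (y, s)"
      using doubled_inf_attained[OF assms(1) _ assms(2)] assms(4) by (metis empty_iff surj_pair)
    have s: "s \<in> {0..<T}" "t \<in> {0..<T}" using m(1) assms(2,4) by auto
    have low: "infconv x s + (t - s)\<^sup>2 / \<alpha> \<le> doubled_inf \<alpha> I (x, t)"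
      using infconv_le_doubled[OF m(1) assms(2), of "(x, t)" \<alpha>] m(2) by simp
    show "infconv x t - \<eta> < doubled_inf \<alpha> I (x, t)"
    proof (cases "\<bar>s - t\<bar> < \<delta>")
      case True
      moreover have "s \<in> I" using m(1) by auto
      moreover have "0 \<le> (t - s)\<^sup>2 / \<alpha>" using \<alpha>(1) by simp
      ultimately show ?thesis using \<delta> low unfolding abs_less_iff by fastforce
    next
      case False
      then have "\<delta> \<le> \<bar>t - s\<bar>" by linarith
      then have "\<delta>\<^sup>2 \<le> (t - s)\<^sup>2" using \<open>\<delta> > 0\<close> power_mono[of \<delta> "\<bar>t - s\<bar>" 2] by simp
      with \<alpha> have "2 * Mb + 1 < (t - s)\<^sup>2 / \<alpha>" by (simp add: less_divide_eq)
      then show ?thesis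
        using low infconv_bounds(1)[OF s(1), of x] infconv_bounds(2)[OF s(2) assms(3)] assms(5) by linarith
    qed
  qed
qed

lemma doubled_inf_continuous_on:
  assumes "compact K" "compact I" "I \<noteq> {}" "I \<subseteq> {0..<T}"
  shows "continuous_on K (doubled_inf \<alpha> I)"
proof -
  have "cball x0 r \<times> I \<subseteq> UNIV \<times> {0..<T}" using assms(4) by auto
  from doubled_continuous_on_pairs[OF this, of K \<alpha>]
  have "uniformly_continuous_on (K \<times> (cball x0 r \<times> I)) (\<lambda>(z, m). doubled \<alpha> z m)"
    using assms(1,2) by (intro compact_uniformly_continuous compact_Times compact_cball)
  from uniformly_continuous_on_Inf_image[OF compact_Times[OF compact_cball assms(2)] _ this] assms(3) rho
  have "uniformly_continuous_on K (\<lambda>z. Inf (doubled \<alpha> z ` (cball x0 r \<times> I)))"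
    by auto
  then show ?thesis
    unfolding doubled_inf_def[abs_def] by (rule uniformly_continuous_imp_continuous)
qed

lemma doubled_expansion:
  "doubled \<alpha> (z + h *\<^sub>R e) m = doubled \<alpha> z m + h * (doubled_gradient \<alpha> z m \<bullet> e)
     + h\<^sup>2 * (exp (- \<gamma> * snd m) * (norm (fst e))\<^sup>2 / \<epsilon>\<^sup>2 + (snd e)\<^sup>2 / \<alpha>)"
proof -
  obtain x t e1 e2 y s where zem: "z = (x, t)" "e = (e1, e2)" "m = (y, s)"
    by (metis surj_pair)
  have "(norm (x + h *\<^sub>R e1 - y))\<^sup>2 = (norm (x - y))\<^sup>2 + h * (2 * ((x - y) \<bullet> e1)) + h\<^sup>2 * (norm e1)\<^sup>2"
    unfolding power2_norm_eq_inner
    by (simp add: inner_add_left inner_add_right inner_diff_left inner_diff_right inner_commute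
        power2_eq_square algebra_simps)
  moreover have "(t + h * e2 - s)\<^sup>2 = (t - s)\<^sup>2 + h * (2 * (t - s) * e2) + h\<^sup>2 * e2\<^sup>2"
    by (simp add: power2_eq_square algebra_simps)
  ultimately have "doubled \<alpha> (z + h *\<^sub>R e) m = u y s + exp (- \<gamma> * s) * ((norm (x - y))\<^sup>2
      + h * (2 * ((x - y) \<bullet> e1)) + h\<^sup>2 * (norm e1)\<^sup>2) / \<epsilon>\<^sup>2
      + ((t - s)\<^sup>2 + h * (2 * (t - s) * e2) + h\<^sup>2 * e2\<^sup>2) / \<alpha>"
    by (simp add: zem doubled_def)
  then show ?thesis
    by (simp add: zem doubled_def doubled_gradient_def divide_inverse algebra_simps)
qed

lemma BJ_equation_at_doubled_min:
  assumes s: "0 < s" "s < T" and "e > 0"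
    and min: "\<And>m. dist m (y, s) < e \<Longrightarrow> snd m \<in> {0<..<T} \<Longrightarrow> doubled \<alpha> (x, t) (y, s) \<le> doubled \<alpha> (x, t) m"
  shows "\<gamma> * (exp (- \<gamma> * s) * (norm (x - y))\<^sup>2 / \<epsilon>\<^sup>2) + 2 * (t - s) / \<alpha>
           + H y s (u y s) ((2 * exp (- \<gamma> * s) / \<epsilon>\<^sup>2) *\<^sub>R (x - y)) = 0"
proof -
  \<comment> \<open>chosen so that \<open>u - \<psi>\<close> is the doubled function\<close>
  define \<psi> where "\<psi> = (\<lambda>p. - ((1 / \<epsilon>\<^sup>2) * exp (- \<gamma> * snd p) * (norm (x - fst p))\<^sup>2 + (1 / \<alpha>) * (t - snd p)\<^sup>2))"
  have C1: "C1_on \<psi> (UNIV \<times> {0<..<T}) (\<lambda>p. (2 * (1 / \<epsilon>\<^sup>2) * exp (- \<gamma> * snd p)) *\<^sub>R (x - fst p))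
      (\<lambda>p. \<gamma> * (1 / \<epsilon>\<^sup>2) * exp (- \<gamma> * snd p) * (norm (x - fst p))\<^sup>2 + 2 * (1 / \<alpha>) * (t - snd p))"
    unfolding \<psi>_def by (rule quadratic_test_function_C1)
  have "local_min_at (\<lambda>(y', s'). u y' s' - \<psi> (y', s')) (UNIV \<times> {0<..<T}) (y, s)"
    unfolding local_min_at_def
  proof (intro exI[of _ e] conjI ballI)
    fix q assume "q \<in> ball (y, s) e \<inter> UNIV \<times> {0<..<T}"
    then have "doubled \<alpha> (x, t) (y, s) \<le> doubled \<alpha> (x, t) q" using min by (auto simp: dist_commute)
    then show "(\<lambda>(y', s'). u y' s' - \<psi> (y', s')) (y, s) \<le> (\<lambda>(y', s'). u y' s' - \<psi> (y', s')) q"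
      by (simp add: \<psi>_def doubled_def case_prod_unfold)
  qed (rule \<open>e > 0\<close>)
  with C1 s u_BJ show ?thesis
    unfolding BJ_solution_def by (fastforce simp: divide_inverse algebra_simps)
qed

text \<open>
  (H1) and \<open>|x - y| \<le> (q + e\<^sup>\<gamma>\<^sup>s \<epsilon>\<^sup>2) / 2\<close> produce the error \<open>\<beta> C1 e\<^sup>\<gamma>\<^sup>s \<epsilon>\<^sup>2 / 2\<close>;
  the lower bound on \<open>\<gamma>\<close> absorbs all remaining multiples of \<open>q\<close>.
\<close>

lemma hamiltonian_penalty_estimate:
  assumes s: "s \<in> {0..T}" and BJ: "\<gamma> * q + \<tau> + H y s v p = 0"
    and q: "q = exp (- \<gamma> * s) * (norm (x - y))\<^sup>2 / \<epsilon>\<^sup>2" and p: "p = (2 * exp (- \<gamma> * s) / \<epsilon>\<^sup>2) *\<^sub>R (x - y)"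
    and rr: "0 \<le> rr"
  shows "\<tau> + H x s (v + q + rr) p \<le> \<beta> * C1 / 2 * exp (\<gamma> * s) * \<epsilon>\<^sup>2 + K3 * rr"
proof -
  define E where "E = exp (\<gamma> * s) * \<epsilon>\<^sup>2"
  have "E > 0" using eps by (simp add: E_def)
  have q0: "0 \<le> q" using q by simp
  have qE: "q * E = (norm (x - y))\<^sup>2" using eps by (simp add: q E_def exp_minus field_simps)
  have "H x s (v + q + rr) p \<le> H x s v p + K3 * (q + rr)"
    using H_lipschitz_u[OF s, of x "v + q + rr" p v] q0 rr by (simp add: abs_le_iff)
  moreover have "H x s v p \<le> H y s v p + C1 * (\<beta> + norm p) * norm (x - y)"
    using H_lipschitz_x[OF s, of x v p y] by (simp add: abs_le_iff)
  moreover have "norm p * norm (x - y) = 2 * q"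
    by (simp add: p q power2_eq_square)
  moreover have "norm (x - y) \<le> (q + E) / 2"
  proof -
    have "0 \<le> (norm (x - y) - E)\<^sup>2" by simp
    then have "2 * norm (x - y) * E \<le> (norm (x - y))\<^sup>2 + E * E" by (simp add: power2_eq_square algebra_simps)
    then have "2 * norm (x - y) * E \<le> q * E + E * E" by (simp only: qE)
    then have "E * (2 * norm (x - y)) \<le> E * (q + E)" by (simp add: algebra_simps)
    then have "2 * norm (x - y) \<le> q + E" using \<open>E > 0\<close> by (simp add: mult_le_cancel_left_pos)
    then show ?thesis by simp
  qed
  then have "C1 * \<beta> * norm (x - y) \<le> C1 * \<beta> * ((q + E) / 2)"
    using C1_nonneg beta by (intro mult_left_mono) auto
  moreover have "(K3 + C1 * \<beta> / 2 + 2 * C1 - \<gamma>) * q \<le> 0"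
    using gamma q0 by (intro mult_nonpos_nonneg) (auto simp: algebra_simps)
  ultimately show ?thesis
    using BJ unfolding E_def by (simp add: algebra_simps)
qed

lemma doubled_min_near:
  assumes "compact I" "I \<subseteq> {0..<T}" "x \<in> cball x0 r" "(y, s) \<in> cball x0 r \<times> I"
    and min: "doubled \<alpha> (x, t) (y, s) = doubled_inf \<alpha> I (x, t)"
  shows "norm (x - y) < \<rho>"
proof -
  have "doubled_inf \<alpha> I (x, t) \<le> doubled \<alpha> (x, t) (x, s)"
    using assms(3,4) by (intro doubled_inf_le[OF assms(1,2)]) auto
  then have "u y s + exp (- \<gamma> * s) * (norm (x - y))\<^sup>2 / \<epsilon>\<^sup>2 \<le> u x s"
    using min by (simp add: doubled_def)
  then show ?thesis using assms(2-4) by (intro penalty_localisation) auto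
qed

lemma doubled_min_subsolution:
  assumes "\<alpha> > 0" "compact I" "I \<subseteq> {0<..<T}" "x \<in> ball x0 (r - \<rho>)" "y \<in> cball x0 r" "s \<in> interior I"
    and min: "doubled \<alpha> (x, t) (y, s) = doubled_inf \<alpha> I (x, t)"
  shows "2 * (t - s) / \<alpha> + H x s (doubled_inf \<alpha> I (x, t)) ((2 * exp (- \<gamma> * s) / \<epsilon>\<^sup>2) *\<^sub>R (x - y))
           \<le> \<beta> * C1 / 2 * exp (\<gamma> * s) * \<epsilon>\<^sup>2 + K3 * ((t - s)\<^sup>2 / \<alpha>)"
proof -
  have I: "I \<subseteq> {0..<T}" and "s \<in> I" using assms(3,6) interior_subset by fastforce+
  then have s: "0 < s" "s < T" using assms(3) by auto
  have "x \<in> cball x0 r" using assms(4) rho by auto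
  with doubled_min_near[OF assms(2) I _ _ min] assms(5) \<open>s \<in> I\<close>
  have "norm (x - y) < \<rho>" by auto
  then have "y \<in> ball x0 r"
    using assms(4) dist_triangle[of x0 y x] by (auto simp: dist_norm norm_minus_commute)
  moreover have "open (ball x0 r \<times> interior I)" by (simp add: open_Times)
  ultimately obtain e where "e > 0" and e: "ball (y, s) e \<subseteq> ball x0 r \<times> interior I"
    using assms(6) open_contains_ball by (metis mem_Times_iff fst_conv snd_conv)
  have "doubled \<alpha> (x, t) (y, s) \<le> doubled \<alpha> (x, t) m" if "dist m (y, s) < e" for m
  proof -
    have "m \<in> cball x0 r \<times> I" using e that interior_subset by (fastforce simp: dist_commute)
    then show ?thesis using doubled_inf_le[OF assms(2) I] min by metis
  qed
  then have BJ: "\<gamma> * (exp (- \<gamma> * s) * (norm (x - y))\<^sup>2 / \<epsilon>\<^sup>2) + 2 * (t - s) / \<alpha>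
      + H y s (u y s) ((2 * exp (- \<gamma> * s) / \<epsilon>\<^sup>2) *\<^sub>R (x - y)) = 0"
    using BJ_equation_at_doubled_min[OF s \<open>e > 0\<close>] by blast
  have "doubled_inf \<alpha> I (x, t) = u y s + exp (- \<gamma> * s) * (norm (x - y))\<^sup>2 / \<epsilon>\<^sup>2 + (t - s)\<^sup>2 / \<alpha>"
    using min by (simp add: doubled_def)
  with hamiltonian_penalty_estimate[OF _ BJ refl refl, of "(t - s)\<^sup>2 / \<alpha>"] s assms(1)
  show ?thesis by simp
qed

section \<open>The subsolution inequality\<close>

text \<open>
  The amount by which the Barron--Jensen inequality at a minimiser \<open>m = (y, s)\<close> falls short of
  the subsolution inequality at \<open>z = (x, t)\<close>: right-hand side at time \<open>s\<close>, the time penalty,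
  and the shift of \<open>H\<close> from time \<open>s\<close> to \<open>t\<close>.
\<close>

definition doubling_error :: "real \<Rightarrow> real set \<Rightarrow> 'a \<times> real \<Rightarrow> 'a \<times> real \<Rightarrow> real" where
  "doubling_error \<alpha> I z m =
     \<beta> * C1 / 2 * exp (\<gamma> * snd m) * \<epsilon>\<^sup>2 + K3 * ((snd z - snd m)\<^sup>2 / \<alpha>)
     + H (fst z) (snd z) (doubled_inf \<alpha> I z) (fst (doubled_gradient \<alpha> z m))
     - H (fst z) (snd m) (doubled_inf \<alpha> I z) (fst (doubled_gradient \<alpha> z m))"

lemma closed_hamiltonian_sublevel:
  assumes "t \<in> {0..T}"
  shows "closed {P :: 'a \<times> real. snd P + H x t w (fst P) \<le> c}"
proof -
  have "continuous_on UNIV (\<lambda>P::'a \<times> real. (\<lambda>(x, t, v, p). H x t v p) ((\<lambda>P. (x, t, w, fst P)) P))"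
    using assms by (intro continuous_on_compose2[OF H_cont]) (auto intro!: continuous_intros)
  then show ?thesis by (intro closed_Collect_le continuous_intros) auto
qed

lemma doubled_gradient_at_min_in_sublevel:
  assumes "\<alpha> > 0" "compact I" "I \<subseteq> {0<..<T}" "xa \<in> ball x0 (r - \<rho>)" "ta \<in> I"
    and m: "(y, s) \<in> cball x0 r \<times> I" "doubled \<alpha> (xa, ta) (y, s) = doubled_inf \<alpha> I (xa, ta)"
    and "s \<in> interior I" "doubling_error \<alpha> I (xa, ta) (y, s) \<le> c"
  shows "snd (doubled_gradient \<alpha> (xa, ta) (y, s))
      + H xa ta (doubled_inf \<alpha> I (xa, ta)) (fst (doubled_gradient \<alpha> (xa, ta) (y, s))) \<le> c"
  using doubled_min_subsolution[OF assms(1-4) _ \<open>s \<in> interior I\<close> m(2)] m(1) assms(9)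
  by (simp add: doubling_error_def doubled_gradient_def)

lemma doubled_max_gradient_bound:
  assumes "\<alpha> > 0" "compact I" "I \<subseteq> {0<..<T}" "xa \<in> ball x0 (r - \<rho>)" "ta \<in> I"
    and local_max: "\<forall>\<^sub>F z in nhds (xa, ta). doubled_inf \<alpha> I z - \<psi> z \<le> doubled_inf \<alpha> I (xa, ta) - \<psi> (xa, ta)"
    and \<psi>: "(\<psi> has_derivative (\<lambda>h. G \<bullet> h)) (at (xa, ta))"
    and minimisers: "\<And>m. m \<in> cball x0 r \<times> I \<Longrightarrow> doubled \<alpha> (xa, ta) m = doubled_inf \<alpha> I (xa, ta) \<Longrightarrow>
      snd m \<in> interior I \<and> doubling_error \<alpha> I (xa, ta) m \<le> c"
  shows "snd G + H xa ta (doubled_inf \<alpha> I (xa, ta)) (fst G) \<le> c"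
proof -
  define C where "C = {P :: 'a \<times> real. snd P + H xa ta (doubled_inf \<alpha> I (xa, ta)) (fst P) \<le> c}"
  have I: "I \<subseteq> {0..<T}" "cball x0 r \<times> I \<subseteq> UNIV \<times> {0..<T}" using assms(3) by auto
  have ta: "ta \<in> {0..T}" using assms(3,5) by auto
  have "G \<in> C"
  proof (rule Inf_family_local_max_gradient_in_convex[where f = "doubled \<alpha>" and M = "cball x0 r \<times> I"])
    show "compact (cball x0 r \<times> I)" "cball x0 r \<times> I \<noteq> {}"
      using assms(2,5) rho by (auto intro: compact_Times)
    show "continuous_on (cball x0 r \<times> I) (doubled \<alpha> z)" for z
      using I(2) by (rule doubled_continuous_on)
    show "continuous_on (cball x0 r \<times> I) (doubled_gradient \<alpha> (xa, ta))"
      unfolding doubled_gradient_def divide_inverse by (intro continuous_intros)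
    show "doubled \<alpha> ((xa, ta) + h *\<^sub>R e) m = doubled \<alpha> (xa, ta) m + h * (doubled_gradient \<alpha> (xa, ta) m \<bullet> e)
        + h\<^sup>2 * (exp (- \<gamma> * snd m) * (norm (fst e))\<^sup>2 / \<epsilon>\<^sup>2 + (snd e)\<^sup>2 / \<alpha>)" for m h e
      by (rule doubled_expansion)
    show "0 \<le> exp (- \<gamma> * snd m) * (norm (fst e))\<^sup>2 / \<epsilon>\<^sup>2 + (snd e)\<^sup>2 / \<alpha>" for m and e :: "'a \<times> real"
      using assms(1) by simp
    show "\<exists>B. \<forall>m\<in>cball x0 r \<times> I. exp (- \<gamma> * snd m) * (norm (fst e))\<^sup>2 / \<epsilon>\<^sup>2 + (snd e)\<^sup>2 / \<alpha> \<le> B"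
      for e :: "'a \<times> real"
    proof (intro exI ballI)
      fix m assume "m \<in> cball x0 r \<times> I"
      then have "exp (- \<gamma> * snd m) \<le> 1" using I(1) gamma_nonneg by auto
      then show "exp (- \<gamma> * snd m) * (norm (fst e))\<^sup>2 / \<epsilon>\<^sup>2 + (snd e)\<^sup>2 / \<alpha>
          \<le> (norm (fst e))\<^sup>2 / \<epsilon>\<^sup>2 + (snd e)\<^sup>2 / \<alpha>"
        by (simp add: divide_right_mono mult_left_le_one_le)
    qed
    show "\<forall>\<^sub>F z in nhds (xa, ta). Inf (doubled \<alpha> z ` (cball x0 r \<times> I)) - \<psi> z
        \<le> Inf (doubled \<alpha> (xa, ta) ` (cball x0 r \<times> I)) - \<psi> (xa, ta)"
      using local_max by (simp add: doubled_inf_def)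
    show "(\<psi> has_derivative (\<bullet>) G) (at (xa, ta))" using \<psi> by simp
    show "closed C" unfolding C_def using ta by (rule closed_hamiltonian_sublevel)
    show "convex C" unfolding C_def by (rule convex_sublevel_snd_plus[OF H_convex[OF ta]])
    fix m assume m: "m \<in> cball x0 r \<times> I" "doubled \<alpha> (xa, ta) m = Inf (doubled \<alpha> (xa, ta) ` (cball x0 r \<times> I))"
    then have min: "doubled \<alpha> (xa, ta) m = doubled_inf \<alpha> I (xa, ta)" by (simp add: doubled_inf_def)
    obtain y s where "m = (y, s)" by fastforce
    with m(1) min minimisers[OF m(1) min] doubled_gradient_at_min_in_sublevel[OF assms(1-5), of y s c]
    show "doubled_gradient \<alpha> (xa, ta) m \<in> C" by (simp add: C_def)
  qed
  then show ?thesis by (simp add: C_def)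
qed

text \<open>The bounds on \<open>v\<close> and \<open>p\<close> are those satisfied at minimisers of the doubled problem.\<close>

definition small_time_oscillation :: "real \<Rightarrow> real \<Rightarrow> real \<Rightarrow> bool" where
  "small_time_oscillation th \<delta> \<eta> \<longleftrightarrow>
     (\<forall>x\<in>cball x0 r. \<forall>s\<in>{th - \<delta>..th + \<delta>}. \<forall>t\<in>{th - \<delta>..th + \<delta>}. infconv x t - infconv x s < \<eta> \<and>
        (\<forall>v p. \<bar>v\<bar> \<le> Mb \<longrightarrow> norm p \<le> 2 * \<rho> / \<epsilon>\<^sup>2 \<longrightarrow> \<bar>H x t v p - H x s v p\<bar> < \<eta>)) \<and>
     (\<forall>s\<in>{th - \<delta>..th + \<delta>}. \<beta> * C1 / 2 * exp (\<gamma> * s) * \<epsilon>\<^sup>2 < \<beta> * C1 / 2 * exp (\<gamma> * th) * \<epsilon>\<^sup>2 + \<eta>)"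

lemma hamiltonian_time_modulus:
  assumes "compact J" "J \<subseteq> {0..T}" "\<eta> > 0"
  obtains \<delta> where "\<delta> > 0" "\<And>x s t v p. x \<in> cball x0 r \<Longrightarrow> s \<in> J \<Longrightarrow> t \<in> J \<Longrightarrow> \<bar>v\<bar> \<le> Mb \<Longrightarrow> norm p \<le> R \<Longrightarrow>
    \<bar>s - t\<bar> < \<delta> \<Longrightarrow> \<bar>H x s v p - H x t v p\<bar> < \<eta>"
proof -
  define A where "A = cball x0 r \<times> cball (0::real) Mb \<times> cball (0::'a) R"
  have "continuous_on (A \<times> J)
      (\<lambda>q. (\<lambda>(x, t, v, p). H x t v p) ((\<lambda>q. (fst (fst q), snd q, fst (snd (fst q)), snd (snd (fst q)))) q))"
    using assms(2) by (intro continuous_on_compose2[OF H_cont]) (auto intro!: continuous_intros)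
  then have "uniformly_continuous_on (A \<times> J) (\<lambda>(a, t). H (fst a) t (fst (snd a)) (snd (snd a)))"
    unfolding A_def case_prod_unfold using assms(1)
    by (intro compact_uniformly_continuous compact_Times compact_cball) auto
  then obtain \<delta> where "\<delta> > 0" and \<delta>: "\<And>a s t. a \<in> A \<Longrightarrow> s \<in> J \<Longrightarrow> t \<in> J \<Longrightarrow> \<bar>s - t\<bar> < \<delta> \<Longrightarrow>
      \<bar>H (fst a) s (fst (snd a)) (snd (snd a)) - H (fst a) t (fst (snd a)) (snd (snd a))\<bar> < \<eta>"
    using uniform_modulus_in_second_argument[OF _ assms(3)] by blast
  show thesis
  proof (rule that[OF \<open>\<delta> > 0\<close>])
    fix x p :: 'a and s t v :: real
    assume "x \<in> cball x0 r" "s \<in> J" "t \<in> J" "\<bar>v\<bar> \<le> Mb" "norm p \<le> R" "\<bar>s - t\<bar> < \<delta>"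
    then show "\<bar>H x s v p - H x t v p\<bar> < \<eta>" using \<delta>[of "(x, v, p)" s t] by (simp add: A_def)
  qed
qed

lemma time_window:
  assumes zh: "(xh, th) \<in> ball x0 (r - \<rho>) \<times> {0<..<T}" and "e0 > 0" "\<eta> > 0"
  obtains \<delta>0 where "\<delta>0 > 0" "cball (xh, th) \<delta>0 \<subseteq> ball (xh, th) e0 \<inter> ball x0 (r - \<rho>) \<times> {0<..<T}"
    "small_time_oscillation th \<delta>0 \<eta>"
proof -
  have "open (ball (xh, th) e0 \<inter> ball x0 (r - \<rho>) \<times> {0<..<T})" by (simp add: open_Times open_Int)
  moreover have "(xh, th) \<in> ball (xh, th) e0 \<inter> ball x0 (r - \<rho>) \<times> {0<..<T}" using zh \<open>e0 > 0\<close> by simp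
  ultimately obtain d where "d > 0" and d: "cball (xh, th) d \<subseteq> ball (xh, th) e0 \<inter> ball x0 (r - \<rho>) \<times> {0<..<T}"
    unfolding open_contains_cball by blast
  define J where "J = {th - d..th + d}"
  have "J \<subseteq> {0<..<T}" using cball_time_slice[of xh th d] d unfolding J_def by blast
  moreover have "compact J" by (simp add: J_def)
  ultimately have J: "compact J" "J \<subseteq> {0..T}" "J \<subseteq> {0..<T}" by auto
  obtain \<delta>H where "\<delta>H > 0" and \<delta>H: "\<And>x s t v p. x \<in> cball x0 r \<Longrightarrow> s \<in> J \<Longrightarrow> t \<in> J \<Longrightarrow> \<bar>v\<bar> \<le> Mb \<Longrightarrow>
      norm p \<le> 2 * \<rho> / \<epsilon>\<^sup>2 \<Longrightarrow> \<bar>s - t\<bar> < \<delta>H \<Longrightarrow> \<bar>H x s v p - H x t v p\<bar> < \<eta>"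
    using hamiltonian_time_modulus[OF J(1,2) \<open>\<eta> > 0\<close>, of "2 * \<rho> / \<epsilon>\<^sup>2"] by blast
  have "uniformly_continuous_on (cball x0 r \<times> J) (\<lambda>(x, t). infconv x t)"
    using infconv_uniformly_continuous[OF J(1,3)] by (simp add: case_prod_unfold)
  then obtain \<delta>U where "\<delta>U > 0" and \<delta>U: "\<And>x s t. x \<in> cball x0 r \<Longrightarrow> s \<in> J \<Longrightarrow> t \<in> J \<Longrightarrow>
      \<bar>s - t\<bar> < \<delta>U \<Longrightarrow> \<bar>infconv x s - infconv x t\<bar> < \<eta>"
    using uniform_modulus_in_second_argument[OF _ \<open>\<eta> > 0\<close>] by blast
  have "continuous_on UNIV (\<lambda>s. \<beta> * C1 / 2 * exp (\<gamma> * s) * \<epsilon>\<^sup>2)" by (intro continuous_intros)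
  then obtain \<delta>g where "\<delta>g > 0" and \<delta>g: "\<And>s. dist s th < \<delta>g \<Longrightarrow>
      dist (\<beta> * C1 / 2 * exp (\<gamma> * s) * \<epsilon>\<^sup>2) (\<beta> * C1 / 2 * exp (\<gamma> * th) * \<epsilon>\<^sup>2) < \<eta>"
    using \<open>\<eta> > 0\<close> unfolding continuous_on_iff by blast
  define \<delta>0 where "\<delta>0 = min (min d (\<delta>H / 3)) (min (\<delta>U / 3) (\<delta>g / 2))"
  have \<delta>0_le: "\<delta>0 \<le> d" "3 * \<delta>0 \<le> \<delta>H" "3 * \<delta>0 \<le> \<delta>U" "2 * \<delta>0 \<le> \<delta>g" by (simp_all add: \<delta>0_def)
  have \<delta>0: "0 < \<delta>0" "{th - \<delta>0..th + \<delta>0} \<subseteq> J"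
    using \<open>d > 0\<close> \<open>\<delta>H > 0\<close> \<open>\<delta>U > 0\<close> \<open>\<delta>g > 0\<close> \<delta>0_le(1) by (auto simp: \<delta>0_def J_def)
  have "cball (xh, th) \<delta>0 \<subseteq> ball (xh, th) e0 \<inter> ball x0 (r - \<rho>) \<times> {0<..<T}"
    using d cball_subset_cball_iff[of "(xh, th)" \<delta>0 "(xh, th)" d] \<delta>0_le(1) by auto
  moreover have "small_time_oscillation th \<delta>0 \<eta>"
    unfolding small_time_oscillation_def
  proof (intro conjI ballI allI impI)
    fix x s t v p assume st: "s \<in> {th - \<delta>0..th + \<delta>0}" "t \<in> {th - \<delta>0..th + \<delta>0}" and x: "x \<in> cball x0 r"
    then have "\<bar>t - s\<bar> < \<delta>H" "\<bar>t - s\<bar> < \<delta>U" "s \<in> J" "t \<in> J" using \<delta>0_le \<delta>0 by auto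
    then show "infconv x t - infconv x s < \<eta>" using \<delta>U[OF x, of t s] by auto
    show "\<bar>H x t v p - H x s v p\<bar> < \<eta>" if "\<bar>v\<bar> \<le> Mb" "norm p \<le> 2 * \<rho> / \<epsilon>\<^sup>2"
      using \<delta>H[OF x _ _ that, of t s] \<open>\<bar>t - s\<bar> < \<delta>H\<close> \<open>s \<in> J\<close> \<open>t \<in> J\<close> by blast
  next
    fix s assume "s \<in> {th - \<delta>0..th + \<delta>0}"
    then show "\<beta> * C1 / 2 * exp (\<gamma> * s) * \<epsilon>\<^sup>2 < \<beta> * C1 / 2 * exp (\<gamma> * th) * \<epsilon>\<^sup>2 + \<eta>"
      using \<delta>g[of s] \<delta>0_le \<delta>0(1) by (simp add: dist_real_def abs_less_iff)
  qed
  ultimately show thesis using that[OF \<delta>0(1)] by blast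
qed

lemma doubled_min_near_in_time:
  assumes "\<alpha> > 0" "compact I" "I \<subseteq> {0..<T}" "x \<in> cball x0 r" "t \<in> I" "\<delta> > 0" "2 * Mb * \<alpha> < \<delta>\<^sup>2"
    and m: "(y, s) \<in> cball x0 r \<times> I" "doubled \<alpha> (x, t) (y, s) = doubled_inf \<alpha> I (x, t)"
  shows "\<bar>t - s\<bar> < \<delta>"
proof -
  have "\<bar>t - s\<bar>\<^sup>2 < \<delta>\<^sup>2" using doubled_inf_time_gap(2)[OF assms(1-5) m] assms(7) by simp
  then show ?thesis by (rule power_less_imp_less_base) (use assms(6) in auto)
qed

lemma exists_doubling_parameter:
  assumes "compact I" "I \<subseteq> {0..<T}" "x \<in> cball x0 r" "t \<in> I" "\<eta> > 0" "\<delta> > 0"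
  obtains \<alpha> where "\<alpha> > 0" "infconv x t - \<eta> < doubled_inf \<alpha> I (x, t)" "2 * Mb * \<alpha> < \<delta>\<^sup>2"
proof -
  have "((\<lambda>\<alpha>. 2 * Mb * \<alpha>) \<longlongrightarrow> 0) (at_right 0)" by (auto intro!: tendsto_eq_intros)
  then have "\<forall>\<^sub>F \<alpha> in at_right 0. 2 * Mb * \<alpha> < \<delta>\<^sup>2" using \<open>\<delta> > 0\<close> by (intro order_tendstoD) auto
  with eventually_doubled_inf_gt[OF assms(1-5)] eventually_at_right_less[of 0]
  have "\<forall>\<^sub>F \<alpha> in at_right 0. 0 < \<alpha> \<and> infconv x t - \<eta> < doubled_inf \<alpha> I (x, t) \<and> 2 * Mb * \<alpha> < \<delta>\<^sup>2"
    by eventually_elim auto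
  then show thesis using that eventually_happens by force
qed

lemma exists_penalised_maximiser:
  fixes th \<delta>0 :: real
  defines "S \<equiv> ball x0 (r - \<rho>) \<times> {0<..<T}" and "I \<equiv> {th - \<delta>0..th + \<delta>0}"
  assumes \<phi>: "continuous_on S \<phi>" and zh: "(xh, th) \<in> S" and \<delta>0: "\<delta>0 > 0" "cball (xh, th) \<delta>0 \<subseteq> S"
    and "\<eta> > 0"
  obtains \<alpha> za where "\<alpha> > 0" "2 * Mb * \<alpha> < (\<delta>0 / 2)\<^sup>2" "infconv xh th - \<eta> < doubled_inf \<alpha> I (xh, th)"
    "za \<in> cball (xh, th) \<delta>0" "\<forall>z\<in>cball (xh, th) \<delta>0. doubled_inf \<alpha> I z - (\<phi> z + (norm (z - (xh, th)))\<^sup>2)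
       \<le> doubled_inf \<alpha> I za - (\<phi> za + (norm (za - (xh, th)))\<^sup>2)"
proof -
  have I: "compact I" "I \<noteq> {}" "I \<subseteq> {0..<T}" "th \<in> I"
    using cball_time_slice[OF \<delta>0(2)[unfolded S_def]] \<delta>0(1) by (auto simp: I_def)
  have "xh \<in> cball x0 r" using zh rho by (auto simp: S_def)
  then obtain \<alpha> where \<alpha>: "\<alpha> > 0" "infconv xh th - \<eta> < doubled_inf \<alpha> I (xh, th)" "2 * Mb * \<alpha> < (\<delta>0 / 2)\<^sup>2"
    using exists_doubling_parameter[OF I(1,3) _ I(4) \<open>\<eta> > 0\<close>, of xh "\<delta>0 / 2"] \<delta>0(1) by auto
  have "continuous_on (cball (xh, th) \<delta>0) (\<lambda>z. doubled_inf \<alpha> I z - (\<phi> z + (norm (z - (xh, th)))\<^sup>2))"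
    using doubled_inf_continuous_on[OF compact_cball I(1-3)] continuous_on_subset[OF \<phi> \<delta>0(2)]
    by (intro continuous_intros) auto
  moreover have "cball (xh, th) \<delta>0 \<noteq> {}" using \<delta>0(1) by simp
  ultimately obtain za where "za \<in> cball (xh, th) \<delta>0" "\<forall>z\<in>cball (xh, th) \<delta>0.
      doubled_inf \<alpha> I z - (\<phi> z + (norm (z - (xh, th)))\<^sup>2) \<le> doubled_inf \<alpha> I za - (\<phi> za + (norm (za - (xh, th)))\<^sup>2)"
    using continuous_attains_sup[OF compact_cball] by blast
  with \<alpha> show thesis using that by blast
qed

lemma penalised_max_near_contact:
  fixes e0 th \<delta>0 :: real
  defines "S \<equiv> ball x0 (r - \<rho>) \<times> {0<..<T}" and "I \<equiv> {th - \<delta>0..th + \<delta>0}"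
  assumes \<delta>0: "\<delta>0 > 0" "cball (xh, th) \<delta>0 \<subseteq> ball (xh, th) e0 \<inter> S"
    and max: "\<And>z. z \<in> ball (xh, th) e0 \<inter> S \<Longrightarrow> infconv (fst z) (snd z) - \<phi> z \<le> infconv xh th - \<phi> (xh, th)"
    and W_zh: "infconv xh th - \<eta> < doubled_inf \<alpha> I (xh, th)"
    and za: "za \<in> cball (xh, th) \<delta>0" and za_max: "\<forall>z\<in>cball (xh, th) \<delta>0.
      doubled_inf \<alpha> I z - (\<phi> z + (norm (z - (xh, th)))\<^sup>2) \<le> doubled_inf \<alpha> I za - (\<phi> za + (norm (za - (xh, th)))\<^sup>2)"
  shows "(norm (za - (xh, th)))\<^sup>2 < \<eta>" "infconv xh th - \<eta> + (\<phi> za - \<phi> (xh, th)) < doubled_inf \<alpha> I za"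
    "doubled_inf \<alpha> I za \<le> infconv xh th + (\<phi> za - \<phi> (xh, th))"
proof -
  have "cball (xh, th) \<delta>0 \<subseteq> ball x0 (r - \<rho>) \<times> {0<..<T}" using \<delta>0(2) by (auto simp: S_def)
  from cball_time_slice[OF this] have "compact I" "I \<subseteq> {0..<T}" by (auto simp: I_def)
  moreover have "\<bar>snd za - th\<bar> \<le> \<delta>0" using dist_snd_le[of za "(xh, th)"] za by (simp add: dist_real_def dist_commute)
  then have "snd za \<in> I" by (auto simp: I_def)
  ultimately have "doubled_inf \<alpha> I za \<le> infconv (fst za) (snd za)"
    using doubled_inf_le_infconv[of I "snd za" \<alpha> "fst za"] by simp
  moreover have "infconv (fst za) (snd za) - \<phi> za \<le> infconv xh th - \<phi> (xh, th)" using za \<delta>0(2) max by blast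
  moreover have "doubled_inf \<alpha> I (xh, th) - \<phi> (xh, th) \<le> doubled_inf \<alpha> I za - (\<phi> za + (norm (za - (xh, th)))\<^sup>2)"
    using za_max[rule_format, of "(xh, th)"] \<delta>0(1) by simp
  ultimately show "(norm (za - (xh, th)))\<^sup>2 < \<eta>" "infconv xh th - \<eta> + (\<phi> za - \<phi> (xh, th)) < doubled_inf \<alpha> I za"
    "doubled_inf \<alpha> I za \<le> infconv xh th + (\<phi> za - \<phi> (xh, th))"
    using W_zh zero_le_power2[of "norm (za - (xh, th))"] by linarith+
qed

lemma penalised_maximiser:
  fixes e0 th \<delta>0 :: real
  defines "S \<equiv> ball x0 (r - \<rho>) \<times> {0<..<T}" and "I \<equiv> {th - \<delta>0..th + \<delta>0}"
  assumes \<phi>: "continuous_on S \<phi>" and zh: "(xh, th) \<in> S"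
    and \<delta>0: "\<delta>0 > 0" "cball (xh, th) \<delta>0 \<subseteq> ball (xh, th) e0 \<inter> S"
    and max: "\<And>z. z \<in> ball (xh, th) e0 \<inter> S \<Longrightarrow> infconv (fst z) (snd z) - \<phi> z \<le> infconv xh th - \<phi> (xh, th)"
    and "\<eta> > 0"
  obtains \<alpha> xa ta where "\<alpha> > 0" "dist (xa, ta) (xh, th) < \<eta>" "dist (xa, ta) (xh, th) < \<delta>0 / 2"
    "\<bar>doubled_inf \<alpha> I (xa, ta) - infconv xh th\<bar> < \<eta>"
    "\<forall>\<^sub>F z in nhds (xa, ta). doubled_inf \<alpha> I z - (\<phi> z + (norm (z - (xh, th)))\<^sup>2)
       \<le> doubled_inf \<alpha> I (xa, ta) - (\<phi> (xa, ta) + (norm ((xa, ta) - (xh, th)))\<^sup>2)"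
    "\<And>m. m \<in> cball x0 r \<times> I \<Longrightarrow> doubled \<alpha> (xa, ta) m = doubled_inf \<alpha> I (xa, ta) \<Longrightarrow> \<bar>snd m - th\<bar> < \<delta>0"
proof -
  define zh where "zh = (xh, th)"
  obtain \<kappa>\<phi> where "\<kappa>\<phi> > 0" and \<kappa>\<phi>: "\<forall>z\<in>S. dist z zh < \<kappa>\<phi> \<longrightarrow> dist (\<phi> z) (\<phi> zh) < \<eta> / 2"
    using \<phi> zh \<open>\<eta> > 0\<close> unfolding continuous_on_iff zh_def by (meson half_gt_zero)
  define \<kappa> where "\<kappa> = min (min \<eta> (\<delta>0 / 2)) \<kappa>\<phi>"
  have "\<kappa> > 0" using \<open>\<eta> > 0\<close> \<delta>0(1) \<open>\<kappa>\<phi> > 0\<close> by (simp add: \<kappa>_def)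
  then have "min (\<kappa>\<^sup>2) (\<eta> / 2) > 0" using \<open>\<eta> > 0\<close> by simp
  then obtain \<alpha> za where "\<alpha> > 0" and \<alpha>: "2 * Mb * \<alpha> < (\<delta>0 / 2)\<^sup>2"
    and W_zh: "infconv xh th - min (\<kappa>\<^sup>2) (\<eta> / 2) < doubled_inf \<alpha> I zh"
    and za: "za \<in> cball zh \<delta>0" and za_max: "\<forall>z\<in>cball zh \<delta>0. doubled_inf \<alpha> I z - (\<phi> z + (norm (z - zh))\<^sup>2)
       \<le> doubled_inf \<alpha> I za - (\<phi> za + (norm (za - zh))\<^sup>2)"
    using exists_penalised_maximiser[OF \<phi>[unfolded S_def] zh[unfolded S_def] \<delta>0(1)] \<delta>0(2)
    unfolding zh_def S_def I_def by blast
  note near = penalised_max_near_contact[OF \<delta>0[unfolded S_def] max[unfolded S_def] W_zh[unfolded zh_def I_def]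
      za[unfolded zh_def] za_max[unfolded zh_def I_def], folded zh_def I_def]
  have "(norm (za - zh))\<^sup>2 < \<kappa>\<^sup>2" using near(1) by simp
  then have "dist za zh < \<kappa>" unfolding dist_norm by (rule power_less_imp_less_base) (use \<open>\<kappa> > 0\<close> in auto)
  moreover have "za \<in> S" using za \<delta>0(2) by (auto simp: zh_def)
  ultimately have close: "dist za zh < \<eta>" "dist za zh < \<delta>0 / 2" "\<bar>\<phi> za - \<phi> zh\<bar> < \<eta> / 2"
    using \<kappa>\<phi> by (auto simp: \<kappa>_def dist_real_def)
  obtain xa ta where za_eq: "za = (xa, ta)" by fastforce
  show thesis
  proof (rule that[OF \<open>\<alpha> > 0\<close>, of xa ta])
    show "dist (xa, ta) (xh, th) < \<eta>" "dist (xa, ta) (xh, th) < \<delta>0 / 2" using close za_eq zh_def by auto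
    have "min (\<kappa>\<^sup>2) (\<eta> / 2) \<le> \<eta> / 2" by simp
    then show "\<bar>doubled_inf \<alpha> I (xa, ta) - infconv xh th\<bar> < \<eta>"
      using near(2,3) close(3) za_eq unfolding abs_less_iff by auto
    have "dist zh za < \<delta>0" using close(2) dist_commute[of za zh] zero_le_dist[of za zh] by linarith
    then have "za \<in> interior (cball zh \<delta>0)" by simp
    from eventually_nhds_le_of_max_on[OF this za_max]
    show "\<forall>\<^sub>F z in nhds (xa, ta). doubled_inf \<alpha> I z - (\<phi> z + (norm (z - (xh, th)))\<^sup>2)
        \<le> doubled_inf \<alpha> I (xa, ta) - (\<phi> (xa, ta) + (norm ((xa, ta) - (xh, th)))\<^sup>2)"
      by (simp add: za_eq zh_def)
    fix m assume m: "m \<in> cball x0 r \<times> I" "doubled \<alpha> (xa, ta) m = doubled_inf \<alpha> I (xa, ta)"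
    have "cball (xh, th) \<delta>0 \<subseteq> ball x0 (r - \<rho>) \<times> {0<..<T}" using \<delta>0(2) by (auto simp: S_def)
    from cball_time_slice[OF this] have I: "compact I" "I \<subseteq> {0..<T}" by (auto simp: I_def)
    have "xa \<in> cball x0 r" "ta \<in> I"
      using \<open>za \<in> S\<close> rho za_eq close(2) dist_snd_le[of za zh] by (auto simp: S_def I_def zh_def dist_real_def)
    moreover have "\<delta>0 / 2 > 0" using \<delta>0(1) by simp
    ultimately have "\<bar>ta - snd m\<bar> < \<delta>0 / 2"
      using doubled_min_near_in_time[OF \<open>\<alpha> > 0\<close> I _ _ _ \<alpha>, where y = "fst m" and s = "snd m"] m by simp
    moreover have "\<bar>ta - th\<bar> < \<delta>0 / 2"
      using close(2) dist_snd_le[of za zh] za_eq by (simp add: zh_def dist_real_def)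
    ultimately show "\<bar>snd m - th\<bar> < \<delta>0" by linarith
  qed
qed

lemma doubled_inf_bounds:
  assumes "\<alpha> > 0" "compact I" "I \<subseteq> {0..<T}" "x \<in> cball x0 r" "t \<in> I"
  shows "\<bar>doubled_inf \<alpha> I (x, t)\<bar> \<le> Mb"
proof -
  obtain m where m: "m \<in> cball x0 r \<times> I" "doubled_inf \<alpha> I (x, t) = doubled \<alpha> (x, t) m"
    using doubled_inf_attained[OF assms(2) _ assms(3)] assms(5) by blast
  then have "\<bar>u (fst m) (snd m)\<bar> \<le> Mb" using assms(3) by (intro u_bound) auto
  moreover have "u (fst m) (snd m) \<le> doubled \<alpha> (x, t) m" using assms(1) by (simp add: doubled_def)
  moreover have "t \<in> {0..<T}" using assms(3,5) by auto
  then have "doubled_inf \<alpha> I (x, t) \<le> Mb"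
    using doubled_inf_le_infconv[OF assms(2,3,5), of \<alpha> x] infconv_bounds(2)[of t x] assms(4) by linarith
  ultimately show ?thesis using m(2) by linarith
qed

lemma penalty_gradient_bound:
  assumes "0 \<le> s" "norm (x - y) < \<rho>"
  shows "norm ((2 * exp (- \<gamma> * s) / \<epsilon>\<^sup>2) *\<^sub>R (x - y)) \<le> 2 * \<rho> / \<epsilon>\<^sup>2"
proof -
  have "exp (- \<gamma> * s) \<le> 1" using assms(1) gamma_nonneg by simp
  then have "2 * exp (- \<gamma> * s) / \<epsilon>\<^sup>2 * norm (x - y) \<le> 2 * 1 / \<epsilon>\<^sup>2 * \<rho>"
    using assms(2) by (intro mult_mono divide_right_mono) auto
  then show ?thesis by simp
qed

lemma doubling_error_bound:
  fixes th \<delta>0 :: real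
  defines "I \<equiv> {th - \<delta>0..th + \<delta>0}"
  assumes "\<alpha> > 0" "I \<subseteq> {0<..<T}" "small_time_oscillation th \<delta>0 \<eta>" "xa \<in> cball x0 r" "ta \<in> I"
    and m: "(y, s) \<in> cball x0 r \<times> I" "doubled \<alpha> (xa, ta) (y, s) = doubled_inf \<alpha> I (xa, ta)"
  shows "doubling_error \<alpha> I (xa, ta) (y, s) < \<beta> * C1 / 2 * exp (\<gamma> * th) * \<epsilon>\<^sup>2 + (2 + K3) * \<eta>"
proof -
  have I: "compact I" "I \<subseteq> {0..<T}" "s \<in> I" "0 \<le> s" using assms(3) m(1) by (auto simp: I_def)
  have "norm (xa - y) < \<rho>" using doubled_min_near[OF I(1,2) assms(5) m] .
  then have "norm (fst (doubled_gradient \<alpha> (xa, ta) (y, s))) \<le> 2 * \<rho> / \<epsilon>\<^sup>2"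
    using penalty_gradient_bound[OF I(4)] by (simp add: doubled_gradient_def)
  moreover have "\<bar>doubled_inf \<alpha> I (xa, ta)\<bar> \<le> Mb" using doubled_inf_bounds[OF assms(2) I(1,2) assms(5,6)] .
  moreover have "(ta - s)\<^sup>2 / \<alpha> \<le> infconv xa ta - infconv xa s"
    using doubled_inf_time_gap(1)[OF assms(2) I(1,2) assms(5,6) m] .
  moreover have osc: "\<forall>x\<in>cball x0 r. \<forall>s\<in>I. \<forall>t\<in>I. infconv x t - infconv x s < \<eta> \<and>
        (\<forall>v p. \<bar>v\<bar> \<le> Mb \<longrightarrow> norm p \<le> 2 * \<rho> / \<epsilon>\<^sup>2 \<longrightarrow> \<bar>H x t v p - H x s v p\<bar> < \<eta>)"
      "\<forall>s\<in>I. \<beta> * C1 / 2 * exp (\<gamma> * s) * \<epsilon>\<^sup>2 < \<beta> * C1 / 2 * exp (\<gamma> * th) * \<epsilon>\<^sup>2 + \<eta>"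
    using assms(4) unfolding small_time_oscillation_def I_def by blast+
  ultimately have "(ta - s)\<^sup>2 / \<alpha> < \<eta>"
    and "H xa ta (doubled_inf \<alpha> I (xa, ta)) (fst (doubled_gradient \<alpha> (xa, ta) (y, s)))
        - H xa s (doubled_inf \<alpha> I (xa, ta)) (fst (doubled_gradient \<alpha> (xa, ta) (y, s))) < \<eta>"
    and "\<beta> * C1 / 2 * exp (\<gamma> * s) * \<epsilon>\<^sup>2 < \<beta> * C1 / 2 * exp (\<gamma> * th) * \<epsilon>\<^sup>2 + \<eta>"
    using assms(5,6) I(3) unfolding abs_less_iff by (meson order.strict_trans1)+
  moreover have "K3 * ((ta - s)\<^sup>2 / \<alpha>) \<le> K3 * \<eta>"
    using \<open>(ta - s)\<^sup>2 / \<alpha> < \<eta>\<close> K3_nonneg by (intro mult_left_mono) auto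
  ultimately show ?thesis by (simp add: doubling_error_def algebra_simps)
qed

lemma infconv_approx_subsolution:
  defines "S \<equiv> ball x0 (r - \<rho>) \<times> {0<..<T}"
  assumes C1: "C1_on \<phi> S Dx Dt" and zh: "(xh, th) \<in> S" and "e0 > 0"
    and max: "\<And>z. z \<in> ball (xh, th) e0 \<inter> S \<Longrightarrow> infconv (fst z) (snd z) - \<phi> z \<le> infconv xh th - \<phi> (xh, th)"
    and "\<eta> > 0"
  shows "\<exists>z\<in>S. \<exists>v. dist z (xh, th) < \<eta> \<and> \<bar>v - infconv xh th\<bar> < \<eta> \<and>
    Dt z + 2 * (snd z - th) + H (fst z) (snd z) v (Dx z + 2 *\<^sub>R (fst z - xh)) \<le> \<beta> * C1 / 2 * exp (\<gamma> * th) * \<epsilon>\<^sup>2 + \<eta>"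
proof -
  have "\<eta> / (2 + K3) > 0" using \<open>\<eta> > 0\<close> K3_nonneg by simp
  then obtain \<delta>0 where \<delta>0: "\<delta>0 > 0" "cball (xh, th) \<delta>0 \<subseteq> ball (xh, th) e0 \<inter> S"
    and osc: "small_time_oscillation th \<delta>0 (\<eta> / (2 + K3))"
    using time_window[OF zh[unfolded S_def] \<open>e0 > 0\<close>] unfolding S_def by blast
  define I where "I = {th - \<delta>0..th + \<delta>0}"
  have "(\<phi> has_derivative (\<lambda>(h, s). Dx p \<bullet> h + Dt p * s)) (at p within S)" if "p \<in> S" for p
    using C1 that unfolding C1_on_def by (blast intro: has_derivative_at_withinI)
  then have "continuous_on S \<phi>" by (rule has_derivative_continuous_on)
  then obtain \<alpha> xa ta where "\<alpha> > 0" and close: "dist (xa, ta) (xh, th) < \<eta>" "dist (xa, ta) (xh, th) < \<delta>0 / 2"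
    and W_close: "\<bar>doubled_inf \<alpha> I (xa, ta) - infconv xh th\<bar> < \<eta>"
    and local_max: "\<forall>\<^sub>F z in nhds (xa, ta). doubled_inf \<alpha> I z - (\<phi> z + (norm (z - (xh, th)))\<^sup>2)
       \<le> doubled_inf \<alpha> I (xa, ta) - (\<phi> (xa, ta) + (norm ((xa, ta) - (xh, th)))\<^sup>2)"
    and min_time: "\<And>m. m \<in> cball x0 r \<times> I \<Longrightarrow> doubled \<alpha> (xa, ta) m = doubled_inf \<alpha> I (xa, ta) \<Longrightarrow>
       \<bar>snd m - th\<bar> < \<delta>0"
    using penalised_maximiser[OF _ zh[unfolded S_def] \<delta>0[unfolded S_def] max[unfolded S_def] \<open>\<eta> > 0\<close>]
    unfolding I_def S_def by blast
  have "(xa, ta) \<in> cball (xh, th) \<delta>0" using close(2) \<delta>0(1) by (simp add: dist_commute)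
  then have za: "(xa, ta) \<in> S" "xa \<in> ball x0 (r - \<rho>)" "ta \<in> I" "xa \<in> cball x0 r"
    using \<delta>0(2) rho dist_snd_le[of "(xa, ta)" "(xh, th)"] by (auto simp: S_def I_def dist_real_def dist_commute)
  have I: "compact I" "I \<subseteq> {0<..<T}" using cball_time_slice[of xh th \<delta>0] \<delta>0(2) by (auto simp: I_def S_def)
  define G where "G = (Dx (xa, ta) + 2 *\<^sub>R (xa - xh), Dt (xa, ta) + 2 * (ta - th))"
  have d\<phi>: "(\<phi> has_derivative (\<lambda>(h, s). Dx (xa, ta) \<bullet> h + Dt (xa, ta) * s)) (at (xa, ta))"
    using C1 za(1) by (simp add: C1_on_def)
  have "((\<lambda>z. \<phi> z + (norm (z - (xh, th)))\<^sup>2) has_derivative (\<lambda>h. G \<bullet> h)) (at (xa, ta))"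
    unfolding power2_norm_eq_inner
    by (rule has_derivative_eq_rhs, (rule derivative_eq_intros d\<phi> refl)+)
      (auto simp: fun_eq_iff G_def inner_commute algebra_simps)
  then have "snd G + H xa ta (doubled_inf \<alpha> I (xa, ta)) (fst G) \<le> \<beta> * C1 / 2 * exp (\<gamma> * th) * \<epsilon>\<^sup>2 + \<eta>"
  proof (rule doubled_max_gradient_bound[OF \<open>\<alpha> > 0\<close> I za(2,3) local_max])
    fix m assume m: "m \<in> cball x0 r \<times> I" "doubled \<alpha> (xa, ta) m = doubled_inf \<alpha> I (xa, ta)"
    have "snd m \<in> interior I" using min_time[OF m] by (auto simp: I_def)
    moreover have "doubling_error \<alpha> I (xa, ta) m < \<beta> * C1 / 2 * exp (\<gamma> * th) * \<epsilon>\<^sup>2 + \<eta>"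
      using doubling_error_bound[OF \<open>\<alpha> > 0\<close> I(2)[unfolded I_def] osc za(4) za(3)[unfolded I_def], of "fst m" "snd m"]
        m K3_nonneg by (simp add: I_def)
    ultimately show "snd m \<in> interior I \<and> doubling_error \<alpha> I (xa, ta) m \<le> \<beta> * C1 / 2 * exp (\<gamma> * th) * \<epsilon>\<^sup>2 + \<eta>"
      by simp
  qed
  then show ?thesis using za(1) close(1) W_close by (intro bexI[of _ "(xa, ta)"] exI) (auto simp: G_def)
qed

lemma infconv_visc_subsolution:
  "visc_subsolution H (\<lambda>x t. \<beta> * C1 / 2 * exp (\<gamma> * t) * \<epsilon>\<^sup>2) (ball x0 (r - \<rho>) \<times> {0<..<T}) infconv"
  unfolding visc_subsolution_def
proof (intro allI impI)
  define S where "S = ball x0 (r - \<rho>) \<times> {0<..<T}"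
  fix \<phi> Dx Dt xh th
  assume C1: "C1_on \<phi> (ball x0 (r - \<rho>) \<times> {0<..<T}) Dx Dt" and zh: "(xh, th) \<in> ball x0 (r - \<rho>) \<times> {0<..<T}"
    and "local_max_at (\<lambda>(y, s). infconv y s - \<phi> (y, s)) (ball x0 (r - \<rho>) \<times> {0<..<T}) (xh, th)"
  then obtain e0 where "e0 > 0"
    and max: "\<And>z. z \<in> ball (xh, th) e0 \<inter> ball x0 (r - \<rho>) \<times> {0<..<T} \<Longrightarrow>
      infconv (fst z) (snd z) - \<phi> z \<le> infconv xh th - \<phi> (xh, th)"
    unfolding local_max_at_def by (force simp: case_prod_unfold)
  define L where "L = (\<lambda>(z, v). Dt z + 2 * (snd z - th) + H (fst z) (snd z) v (Dx z + 2 *\<^sub>R (fst z - xh)))"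
  have "continuous_on S Dx" "continuous_on S Dt" using C1 by (simp_all add: C1_on_def S_def)
  then have Dx: "continuous_on (S \<times> UNIV) (\<lambda>p. Dx (fst p))" and Dt: "continuous_on (S \<times> UNIV) (\<lambda>p. Dt (fst p))"
    by (auto intro!: continuous_on_compose2[of S] continuous_intros)
  have "continuous_on (S \<times> UNIV) (\<lambda>p. (\<lambda>(x, t, v, p). H x t v p)
      ((\<lambda>p. (fst (fst p), snd (fst p), snd p, Dx (fst p) + 2 *\<^sub>R (fst (fst p) - xh))) p))"
    by (intro continuous_on_compose2[OF H_cont] continuous_intros Dx) (auto simp: S_def)
  with Dt have "continuous_on (S \<times> UNIV) L"
    unfolding L_def case_prod_unfold by (auto intro!: continuous_intros)
  then have "continuous (at ((xh, th), infconv xh th) within S \<times> UNIV) L"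
    using zh by (simp add: S_def continuous_on_eq_continuous_within)
  then have "L ((xh, th), infconv xh th) \<le> \<beta> * C1 / 2 * exp (\<gamma> * th) * \<epsilon>\<^sup>2"
  proof (rule le_of_continuous_approximation)
    fix \<eta> :: real assume "\<eta> > 0"
    from infconv_approx_subsolution[OF C1 zh \<open>e0 > 0\<close> max this]
    show "\<exists>z\<in>S. \<exists>v. dist z (xh, th) < \<eta> \<and> \<bar>v - infconv xh th\<bar> < \<eta> \<and>
        L (z, v) \<le> \<beta> * C1 / 2 * exp (\<gamma> * th) * \<epsilon>\<^sup>2 + \<eta>"
      by (simp add: L_def S_def)
  qed
  then show "Dt (xh, th) + H xh th (infconv xh th) (Dx (xh, th)) \<le> \<beta> * C1 / 2 * exp (\<gamma> * th) * \<epsilon>\<^sup>2"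
    by (simp add: L_def)
qed

end

theorem corollary3p3:
  fixes H :: "'a::euclidean_space \<Rightarrow> real \<Rightarrow> real \<Rightarrow> 'a \<Rightarrow> real"
    and u :: "'a \<Rightarrow> real \<Rightarrow> real" and u0 :: "'a \<Rightarrow> real"
    and T C1 K3 \<beta> r \<rho> \<gamma> :: real and x0 :: 'a
  assumes T: "T > 0"
    and H_cont: "continuous_on (UNIV \<times> {0..T} \<times> UNIV \<times> UNIV) (\<lambda>(x, t, v, p). H x t v p)"
    and u0_lip: "\<exists>L. L-lipschitz_on UNIV u0"
    and H1: "C1 \<ge> 0" "\<beta> \<in> {0, 1}"
      "\<And>x y t v p. t \<in> {0..T} \<Longrightarrow> \<bar>H x t v p - H y t v p\<bar> \<le> C1 * (\<beta> + norm p) * norm (x - y)"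
    and H3: "K3 \<ge> 0"
      "\<And>x t v w p. t \<in> {0..T} \<Longrightarrow> \<bar>H x t v p - H x t w p\<bar> \<le> K3 * \<bar>v - w\<bar>"
    and H4: "\<And>x t v. t \<in> {0..T} \<Longrightarrow> convex_on UNIV (H x t v)"
    and u_cont: "continuous_on (UNIV \<times> {0..<T}) (\<lambda>(x, t). u x t)"
    and u_BJ: "BJ_solution H T u0 u"
    and rho: "0 < \<rho>" "\<rho> < r"
    and gamma: "\<gamma> \<ge> (\<beta> / 2 + 2) * C1 + K3"
    and u_bdd: "bounded ((\<lambda>(x, t). u x t) ` (cball x0 r \<times> {0..<T}))"
  shows "\<exists>\<epsilon>0>0. \<forall>\<epsilon>. 0 < \<epsilon> \<and> \<epsilon> < \<epsilon>0 \<longrightarrow>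
           visc_subsolution H (\<lambda>x t. \<beta> * C1 / 2 * exp (\<gamma> * t) * \<epsilon>\<^sup>2)
             (ball x0 (r - \<rho>) \<times> {0<..<T})
             (\<lambda>x t. INF y\<in>cball x0 r. u y t + exp (- \<gamma> * t) * (norm (x - y))\<^sup>2 / \<epsilon>\<^sup>2)"
proof -
  obtain Mb where Mb: "\<And>x t. x \<in> cball x0 r \<Longrightarrow> t \<in> {0..<T} \<Longrightarrow> \<bar>u x t\<bar> \<le> Mb"
    using u_bdd unfolding bounded_iff by fastforce
  define A where "A = 2 * Mb * exp (\<gamma> * T)"
  have "0 \<le> A" using Mb[of x0 0] T rho by (simp add: A_def)
  define \<epsilon>0 where "\<epsilon>0 = \<rho> / sqrt (A + 1)"
  have "\<epsilon>0 > 0" using \<open>0 \<le> A\<close> rho by (simp add: \<epsilon>0_def)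
  moreover have "visc_subsolution H (\<lambda>x t. \<beta> * C1 / 2 * exp (\<gamma> * t) * \<epsilon>\<^sup>2) (ball x0 (r - \<rho>) \<times> {0<..<T})
      (\<lambda>x t. INF y\<in>cball x0 r. u y t + exp (- \<gamma> * t) * (norm (x - y))\<^sup>2 / \<epsilon>\<^sup>2)" if "0 < \<epsilon>" "\<epsilon> < \<epsilon>0" for \<epsilon>
  proof -
    have "(A + 1) * \<epsilon>\<^sup>2 < (A + 1) * \<epsilon>0\<^sup>2" using that \<open>0 \<le> A\<close> by (simp add: power_strict_mono)
    also have "\<dots> = \<rho>\<^sup>2" using \<open>0 \<le> A\<close> by (simp add: \<epsilon>0_def power_divide)
    finally have "A * \<epsilon>\<^sup>2 + \<epsilon>\<^sup>2 < \<rho>\<^sup>2" by (simp add: algebra_simps)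
    then have "2 * Mb * exp (\<gamma> * T) * \<epsilon>\<^sup>2 < \<rho>\<^sup>2" unfolding A_def using zero_le_power2[of \<epsilon>] by linarith
    then interpret BJ_inf_convolution H T u0 u C1 K3 \<beta> \<gamma> x0 r \<rho> \<epsilon> Mb
      using assms \<open>0 < \<epsilon>\<close> Mb by unfold_locales auto
    show ?thesis using infconv_visc_subsolution unfolding infconv_def[abs_def] .
  qed
  ultimately show ?thesis by blast
qed

end
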